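(* Let $f:\{0,1\}^{N_1}\times\{0,1\}^{N_2}\to\{0,1\}$ be a partial function. Then \[\mathrm{R}^G(\mathrm{Mar}(f))=\Omega\left( \frac{\mathrm{R}^{\textsc{CC}}(f)} {\log G}\right).\] Similarly, we also have $\mathrm{D}^G(\mathrm{Mar}(f))=\Omega(\mathrm{D}^{\textsc{CC}}(f)/\log G)$, $\mathrm{R}_0^G(\mathrm{Mar}(f))=\Omega(\mathrm{R}_0^{\textsc{CC}}(f)/\log G)$, and $\mathrm{Q}^G(\mathrm{Mar}(f))=\Omega(\mathrm{Q}^{\textsc{CC}}(f)/\log G)$.
   Context: $\mathrm{D}^{\textsc{CC}},\mathrm{R}_0^{\textsc{CC}},\mathrm{R}^{\textsc{CC}},\mathrm{Q}^{\textsc{CC}}$ denote deterministic, zero-error randomized, bounded-error randomized (private coin), and quantum communication complexity. For $a$ in the set of Alice-inputs appearing in $\mathrm{Dom}(f)$, the marginal $f_a:\{0,1\}^{N_2}\to\{0,1\}$ is $f_a(b)=f(a,b)$ whenever $(a,b)\in\mathrm{Dom}(f)$; $\mathrm{Mar}(f)$ is the set of all such marginals. An extension function with extension $G$ is an injective total $\phi:\{0,1\}^{N_2}\to\{0,1\}^G$; for partial $g$, $g^\phi(z)=g(\phi^{-1}(z))$ on $\phi(\mathrm{Dom}(g))$. For a set $S$ of functions, the extended query complexity $\mathrm{R}^G(S)$ is the minimum over such $\phi$ of $\max_{g\in S}\mathrm{R}(g^\phi)$, where $\mathrm{R}$ is bounded-error randomized query complexity; $\mathrm{D}^G,\mathrm{R}_0^G,\mathrm{Q}^G$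 are defined analogously with deterministic, zero-error randomized, and quantum query complexity. *)

theory Defs
  imports "HOL-Probability.Probability"
begin

text \<open>A partial function f : {0,1}^N1 x {0,1}^N2 -> {0,1} is given by N1, N2 and
  f :: bool list => bool list => bool option; its domain consists of the pairs of
  bit strings of the right lengths on which f is Some.\<close>

definition pdom :: "nat \<Rightarrow> nat \<Rightarrow> (bool list \<Rightarrow> bool list \<Rightarrow> bool option) \<Rightarrow> (bool list \<times> bool list) set" where
  "pdom N1 N2 f = {(a, b). length a = N1 \<and> length b = N2 \<and> f a b \<noteq> None}"

definition qdom :: "nat \<Rightarrow> (bool list \<Rightarrow> bool option) \<Rightarrow> bool list set" where
  "qdom n g = {x. length x = n \<and> g x \<noteq> None}"

definition marg :: "nat \<Rightarrow> nat \<Rightarrow> (bool list \<Rightarrow> bool list \<Rightarrow> bool option) \<Rightarrow> bool list \<Rightarrow> (bool list \<Rightarrow> bool option)" where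
  "marg N1 N2 f a = (\<lambda>b. if (a, b) \<in> pdom N1 N2 f then f a b else None)"

definition Mar :: "nat \<Rightarrow> nat \<Rightarrow> (bool list \<Rightarrow> bool list \<Rightarrow> bool option) \<Rightarrow> (bool list \<Rightarrow> bool option) set" where
  "Mar N1 N2 f = marg N1 N2 f ` {a. \<exists>b. (a, b) \<in> pdom N1 N2 f}"

definition is_extension :: "nat \<Rightarrow> nat \<Rightarrow> (bool list \<Rightarrow> bool list) \<Rightarrow> bool" where
  "is_extension N2 G \<phi> \<longleftrightarrow> inj_on \<phi> {b. length b = N2} \<and> (\<forall>b. length b = N2 \<longrightarrow> length (\<phi> b) = G)"

text \<open>g^phi (z) = g (phi^-1 z) on phi(Dom g), undefined elsewhere.\<close>
definition ext_fun :: "nat \<Rightarrow> (bool list \<Rightarrow> bool list) \<Rightarrow> (bool list \<Rightarrow> bool option) \<Rightarrow> (bool list \<Rightarrow> bool option)" where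
  "ext_fun N2 \<phi> g = (\<lambda>z. if \<exists>b. length b = N2 \<and> \<phi> b = z
                          then g (THE b. length b = N2 \<and> \<phi> b = z) else None)"

text \<open>Extended complexity: min over extensions phi of max over g in S of C(g^phi),
  where C n h is a query complexity measure of a partial function on n bits.\<close>
definition ext_cplx :: "(nat \<Rightarrow> (bool list \<Rightarrow> bool option) \<Rightarrow> real) \<Rightarrow> nat \<Rightarrow> nat \<Rightarrow> (bool list \<Rightarrow> bool option) set \<Rightarrow> real" where
  "ext_cplx C N2 G S = Inf {r. \<exists>\<phi>. is_extension N2 G \<phi> \<and>
       r = Max (insert 0 ((\<lambda>g. C G (ext_fun N2 \<phi> g)) ` S))}"

section \<open>Decision trees and query complexity\<close>

datatype dtree = DLeaf bool | DNode nat dtree dtree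

fun dt_eval :: "dtree \<Rightarrow> bool list \<Rightarrow> bool" where
  "dt_eval (DLeaf v) x = v"
| "dt_eval (DNode i l r) x = (if x ! i then dt_eval r x else dt_eval l x)"

fun dt_depth :: "dtree \<Rightarrow> nat" where
  "dt_depth (DLeaf v) = 0"
| "dt_depth (DNode i l r) = Suc (max (dt_depth l) (dt_depth r))"

fun dt_cost :: "dtree \<Rightarrow> bool list \<Rightarrow> nat" where
  "dt_cost (DLeaf v) x = 0"
| "dt_cost (DNode i l r) x = Suc (if x ! i then dt_cost r x else dt_cost l x)"

fun dt_valid :: "nat \<Rightarrow> dtree \<Rightarrow> bool" where
  "dt_valid n (DLeaf v) = True"
| "dt_valid n (DNode i l r) = (i < n \<and> dt_valid n l \<and> dt_valid n r)"

definition D_query :: "nat \<Rightarrow> (bool list \<Rightarrow> bool option) \<Rightarrow> real" where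
  "D_query n g = real (Inf {d. \<exists>T. dt_valid n T \<and> dt_depth T = d \<and>
                                 (\<forall>x\<in>qdom n g. dt_eval T x = the (g x))})"

definition R_query :: "nat \<Rightarrow> (bool list \<Rightarrow> bool option) \<Rightarrow> real" where
  "R_query n g = real (Inf {d. \<exists>P :: dtree pmf.
      (\<forall>T\<in>set_pmf P. dt_valid n T \<and> dt_depth T \<le> d) \<and>
      (\<forall>x\<in>qdom n g. measure_pmf.prob P {T. dt_eval T x = the (g x)} \<ge> 2/3)})"

text \<open>zero error, worst-case (over inputs) expected number of queries\<close>
definition R0_query :: "nat \<Rightarrow> (bool list \<Rightarrow> bool option) \<Rightarrow> real" where
  "R0_query n g = Inf {r. \<exists>P :: dtree pmf.
      (\<forall>T\<in>set_pmf P. dt_valid n T \<and> (\<forall>x\<in>qdom n g. dt_eval T x = the (g x))) \<and>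
      (\<forall>x\<in>qdom n g. integrable (measure_pmf P) (\<lambda>T. real (dt_cost T x))) \<and>
      r = Max (insert 0 ((\<lambda>x. measure_pmf.expectation P (\<lambda>T. real (dt_cost T x))) ` qdom n g))}"

section \<open>Quantum states and unitaries (finite-dimensional, basis indexed by a finite set)\<close>

definition unitary_on :: "'a set \<Rightarrow> ('a \<Rightarrow> 'a \<Rightarrow> complex) \<Rightarrow> bool" where
  "unitary_on B U \<longleftrightarrow> (\<forall>x\<in>B. \<forall>y\<in>B. (\<Sum>z\<in>B. cnj (U z x) * U z y) = (if x = y then 1 else 0))"

definition qapply :: "'a set \<Rightarrow> ('a \<Rightarrow> 'a \<Rightarrow> complex) \<Rightarrow> ('a \<Rightarrow> complex) \<Rightarrow> ('a \<Rightarrow> complex)" where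
  "qapply B U \<psi> = (\<lambda>x. \<Sum>y\<in>B. U x y * \<psi> y)"

section \<open>Quantum query complexity\<close>

text \<open>Basis states |i, c, w>: query index i (i = n is the null query), answer bit c,
  workspace w < W.\<close>
definition qbasis :: "nat \<Rightarrow> nat \<Rightarrow> (nat \<times> bool \<times> nat) set" where
  "qbasis n W = {(i, c, w). i \<le> n \<and> w < W}"

text \<open>O_x |i,c,w> = |i, c xor x_i, w> (x_n := 0)\<close>
definition qoracle :: "bool list \<Rightarrow> (nat \<times> bool \<times> nat \<Rightarrow> complex) \<Rightarrow> (nat \<times> bool \<times> nat \<Rightarrow> complex)" where
  "qoracle x \<psi> = (\<lambda>(i, c, w). \<psi> (i, c \<noteq> (i < length x \<and> x ! i), w))"

fun qq_rest :: "(nat \<times> bool \<times> nat) set \<Rightarrow> bool list \<Rightarrow> (nat \<times> bool \<times> nat \<Rightarrow> nat \<times> bool \<times> nat \<Rightarrow> complex) list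
                 \<Rightarrow> (nat \<times> bool \<times> nat \<Rightarrow> complex) \<Rightarrow> (nat \<times> bool \<times> nat \<Rightarrow> complex)" where
  "qq_rest B x [] \<psi> = \<psi>"
| "qq_rest B x (U # Us) \<psi> = qq_rest B x Us (qapply B U (qoracle x \<psi>))"

text \<open>final state of U_T O_x ... O_x U_1 O_x U_0 |0,0,0>\<close>
definition qq_final :: "(nat \<times> bool \<times> nat) set \<Rightarrow> bool list \<Rightarrow> (nat \<times> bool \<times> nat \<Rightarrow> nat \<times> bool \<times> nat \<Rightarrow> complex)
                 \<Rightarrow> (nat \<times> bool \<times> nat \<Rightarrow> nat \<times> bool \<times> nat \<Rightarrow> complex) list \<Rightarrow> (nat \<times> bool \<times> nat \<Rightarrow> complex)" where
  "qq_final B x U0 Us = qq_rest B x Us (qapply B U0 (\<lambda>k. if k = (0, False, 0) then 1 else 0))"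

text \<open>bounded error (1/3); T = number of oracle calls; output = function of the measured basis state\<close>
definition Q_query :: "nat \<Rightarrow> (bool list \<Rightarrow> bool option) \<Rightarrow> real" where
  "Q_query n g = real (Inf {T. \<exists>W U0 Us out.
      0 < W \<and> length Us = T \<and> unitary_on (qbasis n W) U0 \<and> (\<forall>U\<in>set Us. unitary_on (qbasis n W) U) \<and>
      (\<forall>x\<in>qdom n g. (\<Sum>k\<in>{k\<in>qbasis n W. out k = the (g x)}. (cmod (qq_final (qbasis n W) x U0 Us k))\<^sup>2) \<ge> 2/3)})"

section \<open>Classical communication complexity\<close>

datatype ('a, 'b) ptree = PLeaf bool
  | PA "'a \<Rightarrow> bool" "('a, 'b) ptree" "('a, 'b) ptree"
  | PB "'b \<Rightarrow> bool" "('a, 'b) ptree" "('a, 'b) ptree"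

fun p_eval :: "('a, 'b) ptree \<Rightarrow> 'a \<Rightarrow> 'b \<Rightarrow> bool" where
  "p_eval (PLeaf v) a b = v"
| "p_eval (PA h l r) a b = (if h a then p_eval r a b else p_eval l a b)"
| "p_eval (PB h l r) a b = (if h b then p_eval r a b else p_eval l a b)"

fun p_depth :: "('a, 'b) ptree \<Rightarrow> nat" where
  "p_depth (PLeaf v) = 0"
| "p_depth (PA h l r) = Suc (max (p_depth l) (p_depth r))"
| "p_depth (PB h l r) = Suc (max (p_depth l) (p_depth r))"

fun p_cost :: "('a, 'b) ptree \<Rightarrow> 'a \<Rightarrow> 'b \<Rightarrow> nat" where
  "p_cost (PLeaf v) a b = 0"
| "p_cost (PA h l r) a b = Suc (if h a then p_cost r a b else p_cost l a b)"
| "p_cost (PB h l r) a b = Suc (if h b then p_cost r a b else p_cost l a b)"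

definition D_CC :: "nat \<Rightarrow> nat \<Rightarrow> (bool list \<Rightarrow> bool list \<Rightarrow> bool option) \<Rightarrow> real" where
  "D_CC N1 N2 f = real (Inf {d. \<exists>P :: (bool list, bool list) ptree. p_depth P = d \<and>
      (\<forall>(a, b)\<in>pdom N1 N2 f. p_eval P a b = the (f a b))})"

text \<open>private coins: Alice's random string r ~ pA, Bob's s ~ pB, independent\<close>
definition R_CC :: "nat \<Rightarrow> nat \<Rightarrow> (bool list \<Rightarrow> bool list \<Rightarrow> bool option) \<Rightarrow> real" where
  "R_CC N1 N2 f = real (Inf {d. \<exists>(P :: (bool list \<times> nat, bool list \<times> nat) ptree) (pA :: nat pmf) (pB :: nat pmf).
      p_depth P = d \<and>
      (\<forall>(a, b)\<in>pdom N1 N2 f. measure_pmf.prob (pair_pmf pA pB)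
          {(r, s). p_eval P (a, r) (b, s) = the (f a b)} \<ge> 2/3)})"

definition R0_CC :: "nat \<Rightarrow> nat \<Rightarrow> (bool list \<Rightarrow> bool list \<Rightarrow> bool option) \<Rightarrow> real" where
  "R0_CC N1 N2 f = Inf {c. \<exists>(P :: (bool list \<times> nat, bool list \<times> nat) ptree) (pA :: nat pmf) (pB :: nat pmf).
      (\<forall>r\<in>set_pmf pA. \<forall>s\<in>set_pmf pB. \<forall>(a, b)\<in>pdom N1 N2 f. p_eval P (a, r) (b, s) = the (f a b)) \<and>
      c = Max (insert 0 ((\<lambda>(a, b). measure_pmf.expectation (pair_pmf pA pB)
                  (\<lambda>(r, s). real (p_cost P (a, r) (b, s)))) ` pdom N1 N2 f))}"

section \<open>Quantum communication complexity (no prior entanglement)\<close>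

text \<open>m qubits, computational basis = bit strings of length m.  Each qubit is held by Alice
  (True) or Bob (False).  In each round the speaker applies a unitary depending on her/his
  input that acts only on the qubits she/he holds, and then sends a set T of her/his qubits
  to the other party; the cost is the total number of qubits sent.  At the end qubit o is
  measured and gives the output.\<close>

definition qbits :: "nat \<Rightarrow> bool list set" where
  "qbits m = {xs. length xs = m}"

text \<open>U acts as V (x) Id where V acts on the qubits in S\<close>
definition local_on :: "nat \<Rightarrow> nat set \<Rightarrow> (bool list \<Rightarrow> bool list \<Rightarrow> complex) \<Rightarrow> bool" where
  "local_on m S U \<longleftrightarrow>
     (\<forall>x\<in>qbits m. \<forall>y\<in>qbits m. (\<exists>j<m. j \<notin> S \<and> x ! j \<noteq> y ! j) \<longrightarrow> U x y = 0) \<and>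
     (\<forall>x\<in>qbits m. \<forall>y\<in>qbits m. \<forall>x'\<in>qbits m. \<forall>y'\<in>qbits m.
        (\<forall>j<m. j \<notin> S \<longrightarrow> x ! j = y ! j \<and> x' ! j = y' ! j) \<and>
        (\<forall>j<m. j \<in> S \<longrightarrow> x ! j = x' ! j \<and> y ! j = y' ! j) \<longrightarrow> U x y = U x' y')"

type_synonym qround = "bool \<times> (bool list \<Rightarrow> bool list \<Rightarrow> bool list \<Rightarrow> complex) \<times> nat set"

fun qcc_valid :: "nat \<Rightarrow> nat \<Rightarrow> nat \<Rightarrow> (nat \<Rightarrow> bool) \<Rightarrow> qround list \<Rightarrow> bool" where
  "qcc_valid N1 N2 m own [] = True"
| "qcc_valid N1 N2 m own ((p, Uf, T) # rs) =
     ((\<forall>inp. length inp = (if p then N1 else N2) \<longrightarrow>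
          unitary_on (qbits m) (Uf inp) \<and> local_on m {j. j < m \<and> own j = p} (Uf inp)) \<and>
      T \<subseteq> {j. j < m \<and> own j = p} \<and>
      qcc_valid N1 N2 m (\<lambda>j. if j \<in> T then \<not> own j else own j) rs)"

fun qcc_run :: "nat \<Rightarrow> qround list \<Rightarrow> bool list \<Rightarrow> bool list \<Rightarrow> (bool list \<Rightarrow> complex) \<Rightarrow> (bool list \<Rightarrow> complex)" where
  "qcc_run m [] a b \<psi> = \<psi>"
| "qcc_run m ((p, Uf, T) # rs) a b \<psi> = qcc_run m rs a b (qapply (qbits m) (Uf (if p then a else b)) \<psi>)"

definition qcc_cost :: "qround list \<Rightarrow> nat" where
  "qcc_cost rs = sum_list (map (\<lambda>(p, Uf, T). card T) rs)"

definition Q_CC :: "nat \<Rightarrow> nat \<Rightarrow> (bool list \<Rightarrow> bool list \<Rightarrow> bool option) \<Rightarrow> real" where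
  "Q_CC N1 N2 f = real (Inf {c. \<exists>m own rs oq. oq < m \<and> qcc_valid N1 N2 m own rs \<and> c = qcc_cost rs \<and>
      (\<forall>(a, b)\<in>pdom N1 N2 f.
         (\<Sum>xs\<in>{xs\<in>qbits m. xs ! oq = the (f a b)}.
            (cmod (qcc_run m rs a b (\<lambda>xs. if xs = replicate m False then 1 else 0) xs))\<^sup>2) \<ge> 2/3)})"

end

theory Submission
  imports Defs
begin

text \<open>Fix an extension \<open>\<phi>\<close>.  Alice knows her marginal \<open>f\<^sub>a\<close>, hence an optimal query algorithm
  for \<open>f\<^sub>a\<^sup>\<phi>\<close>; Bob knows \<open>\<phi> b\<close>, the input on which that algorithm has to be run.  Alice runs it and
  sends every query index to Bob, who answers with the queried bit of \<open>\<phi> b\<close>.  A query thus costs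
  \<open>O(log G)\<close> bits (or qubits: index and answer register go to Bob and back), so every
  communication complexity of \<open>f\<close> is at most \<open>O(log G)\<close> times the corresponding extended query
  complexity of \<open>Mar f\<close>.  For randomized algorithms Alice draws her tree with a private coin; for
  zero error the trees are first pruned to depth \<open>G\<close>, which keeps the protocol finite without
  increasing the expected number of queries.\<close>

lemma finite_bool_lists: "finite {xs :: bool list. length xs = n}"
  using finite_lists_length_eq[of "UNIV :: bool set" n] by simp

lemma finite_pdom: "finite (pdom N1 N2 f)"
proof -
  have "pdom N1 N2 f \<subseteq> {a. length a = N1} \<times> {b. length b = N2}"
    unfolding pdom_def by auto
  then show ?thesis
    using finite_bool_lists by (meson finite_SigmaI finite_subset)
qed

lemma finite_qdom: "finite (qdom n g)"
  using finite_bool_lists[of n] unfolding qdom_def by (rule rev_finite_subset) auto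

lemma finite_pdom_inputs: "finite {a. \<exists>b. (a, b) \<in> pdom N1 N2 f}"
  using finite_bool_lists[of N1] unfolding pdom_def by (rule rev_finite_subset) auto

lemma finite_Mar: "finite (Mar N1 N2 f)"
proof -
  have "Mar N1 N2 f \<subseteq> marg N1 N2 f ` {a. length a = N1}"
    unfolding Mar_def pdom_def by auto
  then show ?thesis
    using finite_bool_lists by (meson finite_surj)
qed

lemma ext_fun_apply:
  assumes "is_extension N2 G \<phi>" "length b = N2"
  shows "ext_fun N2 \<phi> g (\<phi> b) = g b"
proof -
  have "(THE b'. length b' = N2 \<and> \<phi> b' = \<phi> b) = b"
    using assms unfolding is_extension_def by (intro the_equality) (auto dest: inj_onD)
  then show ?thesis
    using assms unfolding ext_fun_def by auto
qed

lemma
  assumes "is_extension N2 G \<phi>" "(a, b) \<in> pdom N1 N2 f"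
  shows ext_marg_qdom: "\<phi> b \<in> qdom G (ext_fun N2 \<phi> (marg N1 N2 f a))"
    and ext_marg_value: "the (ext_fun N2 \<phi> (marg N1 N2 f a) (\<phi> b)) = the (f a b)"
  using assms ext_fun_apply[OF assms(1)]
  unfolding qdom_def pdom_def marg_def is_extension_def by auto

lemma padding_is_extension: "N2 \<le> G \<Longrightarrow> is_extension N2 G (\<lambda>b. b @ replicate (G - length b) False)"
  unfolding is_extension_def inj_on_def by auto

definition ext_cost ::
    "(nat \<Rightarrow> (bool list \<Rightarrow> bool option) \<Rightarrow> real) \<Rightarrow> nat \<Rightarrow> nat \<Rightarrow>
     (bool list \<Rightarrow> bool option) set \<Rightarrow> (bool list \<Rightarrow> bool list) \<Rightarrow> real" where
  "ext_cost C N2 G S \<phi> = Max (insert 0 ((\<lambda>g. C G (ext_fun N2 \<phi> g)) ` S))"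

lemma ext_cost_nonneg: "finite S \<Longrightarrow> 0 \<le> ext_cost C N2 G S \<phi>"
  unfolding ext_cost_def by (simp add: Max_ge)

lemma marg_cost_le_ext_cost:
  assumes "(a, b) \<in> pdom N1 N2 f"
  shows "C G (ext_fun N2 \<phi> (marg N1 N2 f a)) \<le> ext_cost C N2 G (Mar N1 N2 f) \<phi>"
  using assms finite_Mar[of N1 N2 f] unfolding ext_cost_def Mar_def by (intro Max_ge) auto

lemma le_ext_cplx:
  assumes "N2 \<le> G" "0 < K"
    and bound: "\<And>\<phi>. is_extension N2 G \<phi> \<Longrightarrow> X \<le> K * (ext_cost C N2 G S \<phi> + 1)"
  shows "X \<le> K * (ext_cplx C N2 G S + 1)"
proof -
  have "X / K - 1 \<le> Inf {r. \<exists>\<phi>. is_extension N2 G \<phi> \<and> r = ext_cost C N2 G S \<phi>}"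
  proof (rule cInf_greatest)
    show "{r. \<exists>\<phi>. is_extension N2 G \<phi> \<and> r = ext_cost C N2 G S \<phi>} \<noteq> {}"
      using padding_is_extension[OF assms(1)] by auto
  next
    fix r assume "r \<in> {r. \<exists>\<phi>. is_extension N2 G \<phi> \<and> r = ext_cost C N2 G S \<phi>}"
    then show "X / K - 1 \<le> r"
      using bound assms(2) by (auto simp: field_simps)
  qed
  then show ?thesis
    using assms(2) unfolding ext_cplx_def ext_cost_def by (simp add: field_simps)
qed

definition ceil_log2 :: "nat \<Rightarrow> nat" where
  "ceil_log2 n = (LEAST l. n \<le> 2 ^ l)"

lemma le_two_power_ceil_log2: "n \<le> 2 ^ ceil_log2 n"
  unfolding ceil_log2_def by (rule LeastI[of _ n]) (simp add: less_imp_le)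

lemma ceil_log2_le_log:
  assumes "1 \<le> n"
  shows "real (ceil_log2 n) \<le> log 2 (real n) + 1"
proof (cases "ceil_log2 n")
  case 0
  then show ?thesis using assms by simp
next
  case (Suc k)
  then have "\<not> n \<le> 2 ^ k"
    unfolding ceil_log2_def by (metis lessI not_less_Least)
  then have "log 2 (real (2 ^ k)) < log 2 (real n)"
    by (intro log_less) auto
  then show ?thesis
    using Suc by (simp add: log_nat_power)
qed

lemma ceil_log2_Suc_le_log:
  assumes "2 \<le> G"
  shows "real (ceil_log2 (Suc G)) \<le> log 2 (real G) + 2"
proof -
  have "real (ceil_log2 (Suc G)) \<le> log 2 (real (Suc G)) + 1"
    by (intro ceil_log2_le_log) auto
  also have "log 2 (real (Suc G)) \<le> log 2 (2 * real G)"
    using assms by (intro log_le_cancel_iff[THEN iffD2]) auto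
  also have "log 2 (2 * real G) = 1 + log 2 (real G)"
    using assms by (simp add: log_mult)
  finally show ?thesis by simp
qed

section \<open>Decision trees\<close>

fun complete_tree :: "(bool list \<Rightarrow> bool option) \<Rightarrow> nat \<Rightarrow> bool list \<Rightarrow> dtree" where
  "complete_tree g 0 pre = DLeaf (the (g pre))"
| "complete_tree g (Suc k) pre =
     DNode (length pre) (complete_tree g k (pre @ [False])) (complete_tree g k (pre @ [True]))"

lemma complete_tree_props:
  assumes "length pre + k = n" "length x = n" "take (length pre) x = pre"
  shows "dt_eval (complete_tree g k pre) x = the (g x) \<and> dt_valid n (complete_tree g k pre) \<and>
    dt_depth (complete_tree g k pre) = k"
  using assms
proof (induction k arbitrary: pre x)
  case 0
  then show ?case by simp
next
  case (Suc k)
  have lt: "length pre < length x"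
    using Suc.prems by simp
  have "take (Suc (length pre)) x = pre @ [x ! length pre]"
    using Suc.prems(3) lt by (simp add: take_Suc_conv_app_nth)
  then have IH: "dt_eval (complete_tree g k (pre @ [x ! length pre])) x = the (g x)"
    using Suc.IH[of "pre @ [x ! length pre]" x] Suc.prems by simp
  have sub: "dt_valid n (complete_tree g k (pre @ [b])) \<and> dt_depth (complete_tree g k (pre @ [b])) = k"
    for b
  proof -
    define y where "y = take (length pre) x @ b # drop (Suc (length pre)) x"
    have "length y = n" "take (length (pre @ [b])) y = pre @ [b]"
      using Suc.prems lt unfolding y_def by simp_all
    then show ?thesis
      using Suc.IH[of "pre @ [b]" y] Suc.prems by simp
  qed
  show ?case
    using IH sub[of True] sub[of False] lt Suc.prems by (cases "x ! length pre") auto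
qed

lemma ex_complete_tree:
  "\<exists>T. dt_valid n T \<and> dt_depth T = n \<and> (\<forall>x. length x = n \<longrightarrow> dt_eval T x = the (g x))"
  using complete_tree_props[where pre="[]" and k=n and n=n and g=g]
    complete_tree_props[where pre="[]" and k=n and n=n and g=g and x="replicate n False"]
  by (intro exI[of _ "complete_tree g n []"]) auto

lemma dt_cost_le_depth: "dt_cost T x \<le> dt_depth T"
  by (induction T) (auto simp: le_max_iff_disj)

text \<open>Pruning removes the queries whose answers are already recorded in \<open>K\<close>, so that no
  path queries an index twice.\<close>

fun prune :: "(nat \<Rightarrow> bool option) \<Rightarrow> dtree \<Rightarrow> dtree" where
  "prune K (DLeaf v) = DLeaf v"
| "prune K (DNode i l r) =
     (case K i of
        Some True \<Rightarrow> prune K r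
      | Some False \<Rightarrow> prune K l
      | None \<Rightarrow> DNode i (prune (K(i := Some False)) l) (prune (K(i := Some True)) r))"

lemma prune_eval_cost:
  assumes "\<forall>i v. K i = Some v \<longrightarrow> x ! i = v"
  shows "dt_eval (prune K T) x = dt_eval T x \<and> dt_cost (prune K T) x \<le> dt_cost T x"
  using assms
proof (induction T arbitrary: K)
  case (DLeaf v)
  then show ?case by simp
next
  case (DNode i l r)
  show ?case
  proof (cases "K i")
    case None
    have "\<forall>j v. (K(i := Some (x ! i))) j = Some v \<longrightarrow> x ! j = v"
      using DNode.prems by auto
    then show ?thesis
      using None DNode.IH by (cases "x ! i") (simp_all add: fun_upd_def)
  next
    case (Some b)
    then have "x ! i = b"
      using DNode.prems by auto
    then show ?thesis
      using Some DNode.IH[OF DNode.prems] by (cases b) auto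
  qed
qed

lemma prune_valid: "dt_valid n T \<Longrightarrow> dt_valid n (prune K T)"
  by (induction T arbitrary: K) (auto split: option.split bool.split)

lemma prune_depth: "dt_valid n T \<Longrightarrow> dt_depth (prune K T) \<le> card {i. i < n \<and> K i = None}"
proof (induction T arbitrary: K)
  case (DLeaf v) then show ?case by simp
next
  case (DNode i l r)
  show ?case
  proof (cases "K i")
    case None
    have fin: "finite {i. i < n \<and> K i = None}" by simp
    have eq: "{j. j < n \<and> (K(i := Some b)) j = None} = {j. j < n \<and> K j = None} - {i}" for b by auto
    have mem: "i \<in> {j. j < n \<and> K j = None}" using None DNode.prems by simp
    have cc: "card {j. j < n \<and> (K(i := Some b)) j = None} = card {j. j < n \<and> K j = None} - 1" for b
      unfolding eq using fin mem by (simp add: card_Diff_singleton)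
    have pos: "card {j. j < n \<and> K j = None} > 0" using fin mem card_gt_0_iff by blast
    have "dt_depth (prune (K(i := Some False)) l) \<le> card {j. j < n \<and> (K(i := Some False)) j = None}"
      by (rule DNode.IH(1)) (use DNode.prems in simp)
    hence 1: "dt_depth (prune (K(i := Some False)) l) \<le> card {j. j < n \<and> K j = None} - 1"
      using cc[of False] by linarith
    have "dt_depth (prune (K(i := Some True)) r) \<le> card {j. j < n \<and> (K(i := Some True)) j = None}"
      by (rule DNode.IH(2)) (use DNode.prems in simp)
    hence 2: "dt_depth (prune (K(i := Some True)) r) \<le> card {j. j < n \<and> K j = None} - 1"
      using cc[of True] by linarith
    have "dt_depth (prune K (DNode i l r)) = Suc (max (dt_depth (prune (K(i := Some False)) l)) (dt_depth (prune (K(i := Some True)) r)))"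
      using None by simp
    with 1 2 pos show ?thesis by linarith
  next
    case (Some b)
    then show ?thesis using DNode by (cases b) auto
  qed
qed

lemma prune_depth_le: "dt_valid n T \<Longrightarrow> dt_depth (prune (\<lambda>_. None) T) \<le> n"
  using prune_depth[of n T "\<lambda>_. None"] by simp

lemma D_query_attained:
  "\<exists>T. dt_valid n T \<and> real (dt_depth T) = D_query n g \<and> (\<forall>x\<in>qdom n g. dt_eval T x = the (g x))"
proof -
  let ?S = "{d. \<exists>T. dt_valid n T \<and> dt_depth T = d \<and> (\<forall>x\<in>qdom n g. dt_eval T x = the (g x))}"
  have "?S \<noteq> {}"
    using ex_complete_tree[of n g] unfolding qdom_def by auto
  then have "Inf ?S \<in> ?S"
    by (rule Inf_nat_def1)
  then show ?thesis
    unfolding D_query_def by auto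
qed

lemma R_query_attained:
  "\<exists>P :: dtree pmf. (\<forall>T\<in>set_pmf P. dt_valid n T \<and> real (dt_depth T) \<le> R_query n g) \<and>
     (\<forall>x\<in>qdom n g. measure_pmf.prob P {T. dt_eval T x = the (g x)} \<ge> 2/3)"
proof -
  let ?S = "{d. \<exists>P :: dtree pmf. (\<forall>T\<in>set_pmf P. dt_valid n T \<and> dt_depth T \<le> d) \<and>
      (\<forall>x\<in>qdom n g. measure_pmf.prob P {T. dt_eval T x = the (g x)} \<ge> 2/3)}"
  obtain T where "dt_valid n T" "dt_depth T = n" "\<forall>x. length x = n \<longrightarrow> dt_eval T x = the (g x)"
    using ex_complete_tree by blast
  then have "n \<in> ?S"
    unfolding qdom_def by (intro CollectI exI[of _ "return_pmf T"]) auto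
  then have "Inf ?S \<in> ?S"
    by (intro Inf_nat_def1) auto
  then show ?thesis
    unfolding R_query_def by fastforce
qed

lemma R0_query_approx:
  "\<exists>P :: dtree pmf. (\<forall>T\<in>set_pmf P. dt_valid n T \<and> (\<forall>x\<in>qdom n g. dt_eval T x = the (g x))) \<and>
     (\<forall>x\<in>qdom n g. integrable (measure_pmf P) (\<lambda>T. real (dt_cost T x)) \<and>
        measure_pmf.expectation P (\<lambda>T. real (dt_cost T x)) < R0_query n g + 1)"
proof -
  define ok where "ok P \<longleftrightarrow> (\<forall>T\<in>set_pmf P. dt_valid n T \<and> (\<forall>x\<in>qdom n g. dt_eval T x = the (g x))) \<and>
      (\<forall>x\<in>qdom n g. integrable (measure_pmf P) (\<lambda>T. real (dt_cost T x)))" for P :: "dtree pmf"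
  define val where "val P = Max (insert 0 ((\<lambda>x. measure_pmf.expectation P (\<lambda>T. real (dt_cost T x))) ` qdom n g))"
    for P :: "dtree pmf"
  let ?S = "{c. \<exists>P. ok P \<and> c = val P}"
  have R0: "R0_query n g = Inf ?S"
    unfolding R0_query_def ok_def val_def by simp
  obtain T where "dt_valid n T" "\<forall>x. length x = n \<longrightarrow> dt_eval T x = the (g x)"
    using ex_complete_tree by blast
  then have "ok (return_pmf T)"
    unfolding ok_def qdom_def by (auto intro: integrable_measure_pmf_finite)
  then have "?S \<noteq> {}"
    by auto
  moreover have "bdd_below ?S"
    unfolding val_def using finite_qdom by (intro bdd_belowI[of _ 0]) (auto simp: Max_ge)
  ultimately obtain P where "ok P" "val P < R0_query n g + 1"
    unfolding R0 using cInf_less_iff[of ?S "Inf ?S + 1"] by auto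
  moreover have "measure_pmf.expectation P (\<lambda>T. real (dt_cost T x)) \<le> val P" if "x \<in> qdom n g" for x
    unfolding val_def using finite_qdom that by (intro Max_ge) auto
  ultimately show ?thesis
    unfolding ok_def by (meson le_less_trans)
qed

section \<open>Simulating a decision tree by a protocol\<close>

fun send_bits :: "nat \<Rightarrow> nat \<Rightarrow> ('a \<Rightarrow> nat) \<Rightarrow> (nat \<Rightarrow> ('a, 'b) ptree) \<Rightarrow> ('a, 'b) ptree" where
  "send_bits 0 acc v K = K acc"
| "send_bits (Suc j) acc v K =
     PA (\<lambda>\<alpha>. odd (v \<alpha> div 2 ^ j)) (send_bits j (2 * acc) v K) (send_bits j (2 * acc + 1) v K)"

lemma send_bits_eval_cost:
  "p_eval (send_bits j acc v K) \<alpha> \<beta> = p_eval (K (acc * 2 ^ j + v \<alpha> mod 2 ^ j)) \<alpha> \<beta> \<and>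
   p_cost (send_bits j acc v K) \<alpha> \<beta> = j + p_cost (K (acc * 2 ^ j + v \<alpha> mod 2 ^ j)) \<alpha> \<beta>"
proof (induction j arbitrary: acc)
  case 0
  then show ?case by simp
next
  case (Suc j)
  have split: "v \<alpha> mod 2 ^ Suc j = 2 ^ j * (v \<alpha> div 2 ^ j mod 2) + v \<alpha> mod 2 ^ j"
    using mod_mult2_eq[of "v \<alpha>" "2 ^ j" 2] by (simp add: mult.commute)
  show ?case
  proof (cases "odd (v \<alpha> div 2 ^ j)")
    case True
    then have "acc * 2 ^ Suc j + v \<alpha> mod 2 ^ Suc j = (2 * acc + 1) * 2 ^ j + v \<alpha> mod 2 ^ j"
      using split by (simp add: odd_iff_mod_2_eq_one algebra_simps)
    then show ?thesis
      using True Suc.IH[of "2 * acc + 1"] by (simp only: send_bits.simps if_True p_eval.simps p_cost.simps) simp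
  next
    case False
    then have "acc * 2 ^ Suc j + v \<alpha> mod 2 ^ Suc j = (2 * acc) * 2 ^ j + v \<alpha> mod 2 ^ j"
      using split by (simp add: even_iff_mod_2_eq_zero algebra_simps)
    then show ?thesis
      using False Suc.IH[of "2 * acc"] by (simp only: send_bits.simps if_False p_eval.simps p_cost.simps) simp
  qed
qed

lemma send_bits_depth: "(\<And>u. p_depth (K u) \<le> D) \<Longrightarrow> p_depth (send_bits j acc v K) \<le> j + D"
  by (induction j arbitrary: acc) (auto simp: max_def)

fun leaf_value :: "dtree \<Rightarrow> bool" where
  "leaf_value (DLeaf v) = v"
| "leaf_value (DNode i l r) = False"

fun is_node :: "dtree \<Rightarrow> bool" where
  "is_node (DLeaf v) = False"
| "is_node (DNode i l r) = True"

fun node_index :: "dtree \<Rightarrow> nat" where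
  "node_index (DLeaf v) = 0"
| "node_index (DNode i l r) = i"

fun subtree :: "dtree \<Rightarrow> bool list \<Rightarrow> dtree" where
  "subtree T [] = T"
| "subtree (DLeaf v) (b # bs) = DLeaf v"
| "subtree (DNode i l r) (b # bs) = subtree (if b then r else l) bs"

lemma subtree_snoc:
  "subtree T (ans @ [b]) = (case subtree T ans of DLeaf v \<Rightarrow> DLeaf v | DNode i l r \<Rightarrow> if b then r else l)"
  by (induction T ans rule: subtree.induct) (auto split: dtree.split)

definition announce_leaf :: "('a \<Rightarrow> dtree) \<Rightarrow> bool list \<Rightarrow> ('a, 'b) ptree" where
  "announce_leaf ts ans = PA (\<lambda>\<alpha>. leaf_value (subtree (ts \<alpha>) ans)) (PLeaf False) (PLeaf True)"

text \<open>Alice holds the tree \<open>ts \<alpha>\<close> and Bob the query input \<open>xs \<beta>\<close>; \<open>ans\<close> lists Bob's answers so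
  far.  In each round Alice says whether she is at a leaf, then sends the \<open>l\<close> bits of the
  queried index, and Bob answers with one bit.\<close>

fun simulate :: "nat \<Rightarrow> ('a \<Rightarrow> dtree) \<Rightarrow> ('b \<Rightarrow> bool list) \<Rightarrow> nat \<Rightarrow> bool list \<Rightarrow> ('a, 'b) ptree" where
  "simulate l ts xs 0 ans = announce_leaf ts ans"
| "simulate l ts xs (Suc d) ans =
     PA (\<lambda>\<alpha>. is_node (subtree (ts \<alpha>) ans)) (announce_leaf ts ans)
       (send_bits l 0 (\<lambda>\<alpha>. node_index (subtree (ts \<alpha>) ans))
          (\<lambda>u. PB (\<lambda>\<beta>. xs \<beta> ! u) (simulate l ts xs d (ans @ [False])) (simulate l ts xs d (ans @ [True]))))"

lemma simulate_depth: "p_depth (simulate l ts xs d ans) \<le> (l + 2) * d + 1"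
proof (induction d arbitrary: ans)
  case 0
  then show ?case by (simp add: announce_leaf_def)
next
  case (Suc d)
  have "p_depth (send_bits l 0 (\<lambda>\<alpha>. node_index (subtree (ts \<alpha>) ans))
      (\<lambda>u. PB (\<lambda>\<beta>. xs \<beta> ! u) (simulate l ts xs d (ans @ [False])) (simulate l ts xs d (ans @ [True]))))
      \<le> l + ((l + 2) * d + 2)"
    by (rule send_bits_depth) (use Suc.IH in auto)
  then show ?case
    by (simp add: announce_leaf_def)
qed

lemma simulate_depth_floor:
  assumes "0 \<le> r"
  shows "real (p_depth (simulate l ts xs (nat \<lfloor>r\<rfloor>) ans)) \<le> real (l + 2) * (r + 1)"
proof -
  have "real (p_depth (simulate l ts xs (nat \<lfloor>r\<rfloor>) ans)) \<le> real ((l + 2) * nat \<lfloor>r\<rfloor> + 1)"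
    using simulate_depth by (simp only: of_nat_le_iff)
  also have "\<dots> = real (l + 2) * real (nat \<lfloor>r\<rfloor>) + 1"
    by (simp only: of_nat_add of_nat_mult of_nat_1)
  also have "\<dots> \<le> real (l + 2) * r + real (l + 2)"
    using of_nat_floor[OF assms] by (intro add_mono mult_left_mono) auto
  finally show ?thesis
    by (simp add: algebra_simps)
qed

lemma simulate_eval_cost:
  assumes "G \<le> 2 ^ l" "dt_valid G (subtree (ts \<alpha>) ans)" "dt_depth (subtree (ts \<alpha>) ans) \<le> d"
  shows "p_eval (simulate l ts xs d ans) \<alpha> \<beta> = dt_eval (subtree (ts \<alpha>) ans) (xs \<beta>) \<and>
    p_cost (simulate l ts xs d ans) \<alpha> \<beta> \<le> (l + 2) * dt_cost (subtree (ts \<alpha>) ans) (xs \<beta>) + 2"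
  using assms(2,3)
proof (induction d arbitrary: ans)
  case 0
  then show ?case by (cases "subtree (ts \<alpha>) ans") (auto simp: announce_leaf_def)
next
  case (Suc d)
  show ?case
  proof (cases "subtree (ts \<alpha>) ans")
    case (DLeaf v)
    then show ?thesis by (simp add: announce_leaf_def)
  next
    case (DNode i lt rt)
    let ?b = "xs \<beta> ! i"
    have "i < 2 ^ l"
      using Suc.prems DNode assms(1) by auto
    then have send: "p_eval (simulate l ts xs (Suc d) ans) \<alpha> \<beta> = p_eval (simulate l ts xs d (ans @ [?b])) \<alpha> \<beta>"
      "p_cost (simulate l ts xs (Suc d) ans) \<alpha> \<beta> = l + 2 + p_cost (simulate l ts xs d (ans @ [?b])) \<alpha> \<beta>"
      using send_bits_eval_cost[of l 0 _ _ \<alpha> \<beta>] DNode by (cases ?b; simp)+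
    have next_node: "subtree (ts \<alpha>) (ans @ [?b]) = (if ?b then rt else lt)"
      using DNode by (simp add: subtree_snoc)
    then have "dt_valid G (subtree (ts \<alpha>) (ans @ [?b]))" "dt_depth (subtree (ts \<alpha>) (ans @ [?b])) \<le> d"
      using Suc.prems DNode by auto
    note IH = Suc.IH[OF this]
    have "dt_eval (subtree (ts \<alpha>) ans) (xs \<beta>) = dt_eval (subtree (ts \<alpha>) (ans @ [?b])) (xs \<beta>)"
      "dt_cost (subtree (ts \<alpha>) ans) (xs \<beta>) = Suc (dt_cost (subtree (ts \<alpha>) (ans @ [?b])) (xs \<beta>))"
      using next_node DNode by simp_all
    with IH show ?thesis
      unfolding send by simp
  qed
qed

lemma p_cost_le_depth: "p_cost P a b \<le> p_depth P"
  by (induction P) (auto simp: le_max_iff_disj)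

lemma D_CC_le_depth:
  assumes "\<And>a b. (a, b) \<in> pdom N1 N2 f \<Longrightarrow> p_eval P a b = the (f a b)"
  shows "D_CC N1 N2 f \<le> real (p_depth P)"
  unfolding D_CC_def using assms by (intro of_nat_mono cInf_lower) auto

lemma R_CC_le_depth:
  fixes P :: "(bool list \<times> nat, bool list \<times> nat) ptree"
  assumes "\<And>a b. (a, b) \<in> pdom N1 N2 f \<Longrightarrow>
    measure_pmf.prob (pair_pmf pA pB) {(r, s). p_eval P (a, r) (b, s) = the (f a b)} \<ge> 2/3"
  shows "R_CC N1 N2 f \<le> real (p_depth P)"
  unfolding R_CC_def using assms by (intro of_nat_mono cInf_lower) blast+

lemma R0_CC_le_expected_cost:
  fixes P :: "(bool list \<times> nat, bool list \<times> nat) ptree"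
  assumes "\<And>a b r s. (a, b) \<in> pdom N1 N2 f \<Longrightarrow> r \<in> set_pmf pA \<Longrightarrow> s \<in> set_pmf pB \<Longrightarrow>
      p_eval P (a, r) (b, s) = the (f a b)"
    and "\<And>a b. (a, b) \<in> pdom N1 N2 f \<Longrightarrow>
      measure_pmf.expectation (pair_pmf pA pB) (\<lambda>(r, s). real (p_cost P (a, r) (b, s))) \<le> c"
    and "0 \<le> c"
  shows "R0_CC N1 N2 f \<le> c"
proof -
  let ?E = "\<lambda>(a, b). measure_pmf.expectation (pair_pmf pA pB) (\<lambda>(r, s). real (p_cost P (a, r) (b, s)))"
  have "R0_CC N1 N2 f \<le> Max (insert 0 (?E ` pdom N1 N2 f))"
    unfolding R0_CC_def
  proof (rule cInf_lower)
    show "bdd_below {c. \<exists>(P :: (bool list \<times> nat, bool list \<times> nat) ptree) (pA :: nat pmf) (pB :: nat pmf).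
      (\<forall>r\<in>set_pmf pA. \<forall>s\<in>set_pmf pB. \<forall>(a, b)\<in>pdom N1 N2 f. p_eval P (a, r) (b, s) = the (f a b)) \<and>
      c = Max (insert 0 ((\<lambda>(a, b). measure_pmf.expectation (pair_pmf pA pB)
                  (\<lambda>(r, s). real (p_cost P (a, r) (b, s)))) ` pdom N1 N2 f))}"
      using finite_pdom by (intro bdd_belowI[of _ 0]) (auto simp: Max_ge)
  qed (use assms(1) in blast)
  also have "\<dots> \<le> c"
    using finite_pdom assms(2,3) by (subst Max_le_iff) auto
  finally show ?thesis .
qed

text \<open>A single natural-number seed yields a sample of every distribution in a finite family:
  it encodes one sample of their product.\<close>

definition family_seed :: "'a set \<Rightarrow> ('a \<Rightarrow> 'b pmf) \<Rightarrow> nat pmf" where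
  "family_seed A P = map_pmf (to_nat_on (set_pmf (Pi_pmf A undefined P))) (Pi_pmf A undefined P)"

definition family_pick :: "'a set \<Rightarrow> ('a \<Rightarrow> 'b pmf) \<Rightarrow> nat \<Rightarrow> 'a \<Rightarrow> 'b" where
  "family_pick A P n = from_nat_into (set_pmf (Pi_pmf A undefined P)) n"

lemma map_family_pick:
  assumes "finite A" "a \<in> A"
  shows "map_pmf (\<lambda>n. family_pick A P n a) (family_seed A P) = P a"
proof -
  let ?Q = "Pi_pmf A undefined P"
  have "map_pmf (\<lambda>n. family_pick A P n a) (family_seed A P) = map_pmf (\<lambda>F. F a) ?Q"
    unfolding family_pick_def family_seed_def pmf.map_comp comp_def by (intro map_pmf_cong) simp_all
  also have "\<dots> = P a"
    using Pi_pmf_component[OF assms(1), of a undefined P] assms(2) by simp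
  finally show ?thesis .
qed

lemma family_pick_in_set_pmf:
  assumes "finite A" "a \<in> A" "n \<in> set_pmf (family_seed A P)"
  shows "family_pick A P n a \<in> set_pmf (P a)"
  using assms(3) map_family_pick[OF assms(1,2), of P, THEN arg_cong[where f=set_pmf]] by auto

lemma integrable_pmf_bounded:
  fixes f :: "'a \<Rightarrow> real"
  shows "(\<And>x. x \<in> set_pmf p \<Longrightarrow> \<bar>f x\<bar> \<le> B) \<Longrightarrow> integrable (measure_pmf p) f"
  by (intro measure_pmf.integrable_const_bound[where B=B]) (auto simp: AE_measure_pmf_iff)

lemma expectation_pmf_mono:
  fixes f g :: "'a \<Rightarrow> real"
  assumes "\<And>x. x \<in> set_pmf p \<Longrightarrow> f x \<le> g x" "integrable (measure_pmf p) f" "integrable (measure_pmf p) g"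
  shows "measure_pmf.expectation p f \<le> measure_pmf.expectation p g"
  using assms by (intro integral_mono_AE) (auto simp: AE_measure_pmf_iff)

lemma D_CC_le_ext_cost:
  assumes ext: "is_extension N2 G \<phi>"
  shows "D_CC N1 N2 f \<le> real (ceil_log2 G + 2) * (ext_cost D_query N2 G (Mar N1 N2 f) \<phi> + 1)"
proof -
  define r where "r = ext_cost D_query N2 G (Mar N1 N2 f) \<phi>"
  define g where "g a = ext_fun N2 \<phi> (marg N1 N2 f a)" for a
  define good where "good a T \<longleftrightarrow> dt_valid G T \<and> real (dt_depth T) = D_query G (g a) \<and>
      (\<forall>x\<in>qdom G (g a). dt_eval T x = the (g a x))" for a T
  define T where "T a = (SOME T. good a T)" for a
  have T: "good a (T a)" for a
    unfolding T_def good_def by (rule someI_ex) (rule D_query_attained)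
  define P where "P = simulate (ceil_log2 G) T \<phi> (nat \<lfloor>r\<rfloor>) []"
  have "p_eval P a b = the (f a b)" if ab: "(a, b) \<in> pdom N1 N2 f" for a b
  proof -
    have "dt_depth (T a) \<le> nat \<lfloor>r\<rfloor>"
      using T[of a] marg_cost_le_ext_cost[OF ab, of D_query G \<phi>]
      unfolding r_def g_def good_def by (intro le_nat_floor) simp
    then have "p_eval P a b = dt_eval (T a) (\<phi> b)"
      unfolding P_def using simulate_eval_cost[OF le_two_power_ceil_log2[of G], where ts=T and
        \<alpha>=a and ans="[]" and d="nat \<lfloor>r\<rfloor>" and xs=\<phi> and \<beta>=b] T[of a] unfolding good_def by simp
    then show ?thesis
      using T[of a] ext_marg_qdom[OF ext ab] ext_marg_value[OF ext ab] unfolding g_def good_def by simp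
  qed
  then have "D_CC N1 N2 f \<le> real (p_depth P)"
    by (rule D_CC_le_depth)
  also have "\<dots> \<le> real (ceil_log2 G + 2) * (r + 1)"
    unfolding P_def by (intro simulate_depth_floor) (simp add: r_def ext_cost_nonneg finite_Mar)
  finally show ?thesis
    unfolding r_def .
qed

lemma simulate_family_eval_cost:
  assumes "finite A" "a \<in> A" "G \<le> 2 ^ l" "\<And>T. T \<in> set_pmf (P a) \<Longrightarrow> dt_valid G T \<and> dt_depth T \<le> d"
    and "n \<in> set_pmf (family_seed A P)"
  shows "p_eval (simulate l (\<lambda>(a, n). family_pick A P n a) xs d []) (a, n) \<beta> =
      dt_eval (family_pick A P n a) (xs \<beta>) \<and>
    p_cost (simulate l (\<lambda>(a, n). family_pick A P n a) xs d []) (a, n) \<beta> \<le>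
      (l + 2) * dt_cost (family_pick A P n a) (xs \<beta>) + 2"
  using simulate_eval_cost[OF assms(3), where ts="\<lambda>(a, n). family_pick A P n a" and \<alpha>="(a, n)" and
      ans="[]" and d=d and xs=xs and \<beta>=\<beta>]
    assms(4)[OF family_pick_in_set_pmf[OF assms(1,2,5)]]
  by simp

lemma simulate_family_prob:
  fixes xs :: "'b \<times> nat \<Rightarrow> bool list"
  assumes "finite A" "a \<in> A" "G \<le> 2 ^ l" "\<And>T. T \<in> set_pmf (P a) \<Longrightarrow> dt_valid G T \<and> dt_depth T \<le> d"
  shows "measure_pmf.prob (pair_pmf (family_seed A P) (return_pmf 0))
      {(n, s). p_eval (simulate l (\<lambda>(a, n). family_pick A P n a) xs d []) (a, n) (b, s) = v}
    = measure_pmf.prob (P a) {T. dt_eval T (xs (b, 0)) = v}"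
proof -
  let ?PP = "simulate l (\<lambda>(a, n). family_pick A P n a) xs d []"
  let ?seed = "family_seed A P"
  have "measure_pmf.prob (pair_pmf ?seed (return_pmf 0)) {(n, s). p_eval ?PP (a, n) (b, s) = v}
      = measure_pmf.prob ?seed {n. p_eval ?PP (a, n) (b, 0) = v}"
    by (simp add: pair_return_pmf2 vimage_def)
  also have "\<dots> = measure_pmf.prob ?seed {n. dt_eval (family_pick A P n a) (xs (b, 0)) = v}"
    using simulate_family_eval_cost[where P=P and d=d and xs=xs and \<beta>="(b, 0)", OF assms]
    by (intro measure_pmf.finite_measure_eq_AE) (simp_all add: AE_measure_pmf_iff)
  also have "\<dots> = measure_pmf.prob (map_pmf (\<lambda>n. family_pick A P n a) ?seed) {T. dt_eval T (xs (b, 0)) = v}"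
    by (simp add: vimage_def)
  finally show ?thesis
    unfolding map_family_pick[OF assms(1,2)] .
qed

lemma simulate_family_expected_cost:
  fixes xs :: "'b \<times> nat \<Rightarrow> bool list"
  assumes "finite A" "a \<in> A" "G \<le> 2 ^ l" "\<And>T. T \<in> set_pmf (P a) \<Longrightarrow> dt_valid G T \<and> dt_depth T \<le> d"
  shows "measure_pmf.expectation (pair_pmf (family_seed A P) (return_pmf 0))
      (\<lambda>(n, s). real (p_cost (simulate l (\<lambda>(a, n). family_pick A P n a) xs d []) (a, n) (b, s)))
    \<le> real (l + 2) * measure_pmf.expectation (P a) (\<lambda>T. real (dt_cost T (xs (b, 0)))) + 2"
proof -
  let ?PP = "simulate l (\<lambda>(a, n). family_pick A P n a) xs d []"
  let ?seed = "family_seed A P"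
  let ?c = "\<lambda>T. real (dt_cost T (xs (b, 0)))"
  have bounded: "\<bar>real (l + 2) * ?c T + 2\<bar> \<le> real (l + 2) * real d + 2" if "T \<in> set_pmf (P a)" for T
    using assms(4)[OF that] dt_cost_le_depth[of T "xs (b, 0)"] by (simp add: mult_left_mono)
  have "measure_pmf.expectation (pair_pmf ?seed (return_pmf 0)) (\<lambda>(n, s). real (p_cost ?PP (a, n) (b, s)))
      = measure_pmf.expectation ?seed (\<lambda>n. real (p_cost ?PP (a, n) (b, 0)))"
    by (simp add: pair_return_pmf2)
  also have "\<dots> \<le> measure_pmf.expectation ?seed (\<lambda>n. real (l + 2) * ?c (family_pick A P n a) + 2)"
  proof (rule expectation_pmf_mono)
    fix n assume "n \<in> set_pmf ?seed"
    then have "p_cost ?PP (a, n) (b, 0) \<le> (l + 2) * dt_cost (family_pick A P n a) (xs (b, 0)) + 2"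
      using simulate_family_eval_cost[where P=P and d=d and xs=xs and \<beta>="(b, 0)", OF assms] by blast
    then show "real (p_cost ?PP (a, n) (b, 0)) \<le> real (l + 2) * ?c (family_pick A P n a) + 2"
      by (metis of_nat_add of_nat_le_iff of_nat_mult of_nat_numeral)
  next
    show "integrable (measure_pmf ?seed) (\<lambda>n. real (p_cost ?PP (a, n) (b, 0)))"
      by (rule integrable_pmf_bounded[where B="real (p_depth ?PP)"]) (simp add: p_cost_le_depth)
    show "integrable (measure_pmf ?seed) (\<lambda>n. real (l + 2) * ?c (family_pick A P n a) + 2)"
      using bounded family_pick_in_set_pmf[OF assms(1,2)] by (intro integrable_pmf_bounded) blast
  qed
  also have "\<dots> = measure_pmf.expectation (map_pmf (\<lambda>n. family_pick A P n a) ?seed) (\<lambda>T. real (l + 2) * ?c T + 2)"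
    by (rule integral_map_pmf[symmetric])
  also have "\<dots> = measure_pmf.expectation (P a) (\<lambda>T. real (l + 2) * ?c T + 2)"
    unfolding map_family_pick[OF assms(1,2)] ..
  also have "\<dots> = real (l + 2) * measure_pmf.expectation (P a) ?c + 2"
  proof -
    have "integrable (measure_pmf (P a)) ?c"
      using assms(4) dt_cost_le_depth by (intro integrable_pmf_bounded[where B="real d"]) (force intro: le_trans)
    then show ?thesis
      by (simp add: integral_add)
  qed
  finally show ?thesis .
qed

lemma R_CC_le_ext_cost:
  assumes ext: "is_extension N2 G \<phi>"
  shows "R_CC N1 N2 f \<le> real (ceil_log2 G + 2) * (ext_cost R_query N2 G (Mar N1 N2 f) \<phi> + 1)"
proof -
  define r where "r = ext_cost R_query N2 G (Mar N1 N2 f) \<phi>"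
  define g where "g a = ext_fun N2 \<phi> (marg N1 N2 f a)" for a
  define A where "A = {a. \<exists>b. (a, b) \<in> pdom N1 N2 f}"
  define good where "good a P \<longleftrightarrow> (\<forall>T\<in>set_pmf P. dt_valid G T \<and> real (dt_depth T) \<le> R_query G (g a)) \<and>
      (\<forall>x\<in>qdom G (g a). measure_pmf.prob P {T. dt_eval T x = the (g a x)} \<ge> 2/3)" for a P
  define P where "P a = (SOME P. good a P)" for a
  have P: "good a (P a)" for a
    unfolding P_def good_def by (rule someI_ex) (rule R_query_attained)
  have finA: "finite A"
    unfolding A_def by (rule finite_pdom_inputs)
  define PP where "PP = simulate (ceil_log2 G) (\<lambda>(a, n). family_pick A P n a) (\<lambda>(b, s :: nat). \<phi> b)
    (nat \<lfloor>r\<rfloor>) []"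
  have "measure_pmf.prob (pair_pmf (family_seed A P) (return_pmf 0))
      {(n, s). p_eval PP (a, n) (b, s) = the (f a b)} \<ge> 2/3"
    if ab: "(a, b) \<in> pdom N1 N2 f" for a b
  proof -
    have a: "a \<in> A"
      using ab unfolding A_def by auto
    have "dt_valid G T \<and> dt_depth T \<le> nat \<lfloor>r\<rfloor>" if "T \<in> set_pmf (P a)" for T
    proof -
      have "dt_valid G T" "real (dt_depth T) \<le> r"
        using P[of a] that marg_cost_le_ext_cost[OF ab, of R_query G \<phi>] unfolding r_def g_def good_def
        by auto
      then show ?thesis
        by (simp add: le_nat_floor)
    qed
    from simulate_family_prob[OF finA a le_two_power_ceil_log2 this, where xs="\<lambda>(b, s :: nat). \<phi> b"]
    have "measure_pmf.prob (pair_pmf (family_seed A P) (return_pmf 0))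
        {(n, s). p_eval PP (a, n) (b, s) = the (f a b)} = measure_pmf.prob (P a) {T. dt_eval T (\<phi> b) = the (f a b)}"
      unfolding PP_def by simp
    also have "\<dots> \<ge> 2/3"
      using P[of a] ext_marg_qdom[OF ext ab] ext_marg_value[OF ext ab] unfolding g_def good_def by auto
    finally show ?thesis .
  qed
  then have "R_CC N1 N2 f \<le> real (p_depth PP)"
    by (rule R_CC_le_depth)
  also have "\<dots> \<le> real (ceil_log2 G + 2) * (r + 1)"
    unfolding PP_def by (intro simulate_depth_floor) (simp add: r_def ext_cost_nonneg finite_Mar)
  finally show ?thesis
    unfolding r_def .
qed

lemma set_pmf_map_prune:
  assumes "T \<in> set_pmf (map_pmf (prune (\<lambda>_. None)) P)"
    and "\<forall>T\<in>set_pmf P. dt_valid n T \<and> (\<forall>x\<in>X. dt_eval T x = h x)"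
  shows "dt_valid n T \<and> dt_depth T \<le> n \<and> (\<forall>x\<in>X. dt_eval T x = h x)"
proof -
  obtain T0 where T0: "T0 \<in> set_pmf P" "T = prune (\<lambda>_. None) T0"
    using assms(1) by auto
  then have "dt_valid n T0" "\<forall>x\<in>X. dt_eval T0 x = h x"
    using assms(2) by auto
  then show ?thesis
    using T0(2) prune_valid[of n T0] prune_depth_le[of n T0] prune_eval_cost[of "\<lambda>_. None" _ T0] by simp
qed

lemma integrable_pruned_cost:
  assumes "\<forall>T\<in>set_pmf P. dt_valid n T"
  shows "integrable (measure_pmf P) (\<lambda>T. real (dt_cost (prune (\<lambda>_. None) T) x))"
proof (rule integrable_pmf_bounded[where B="real n"])
  fix T assume "T \<in> set_pmf P"
  then have "dt_depth (prune (\<lambda>_. None) T) \<le> n"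
    using assms prune_depth_le by blast
  then show "\<bar>real (dt_cost (prune (\<lambda>_. None) T) x)\<bar> \<le> real n"
    using dt_cost_le_depth[of "prune (\<lambda>_. None) T" x] by simp
qed

lemma expectation_pruned_cost_le:
  assumes "\<forall>T\<in>set_pmf P. dt_valid n T" "integrable (measure_pmf P) (\<lambda>T. real (dt_cost T x))"
  shows "measure_pmf.expectation P (\<lambda>T. real (dt_cost (prune (\<lambda>_. None) T) x))
    \<le> measure_pmf.expectation P (\<lambda>T. real (dt_cost T x))"
proof (rule expectation_pmf_mono)
  fix T
  show "real (dt_cost (prune (\<lambda>_. None) T) x) \<le> real (dt_cost T x)"
    using prune_eval_cost[of "\<lambda>_. None" x T] by simp
qed (use integrable_pruned_cost[OF assms(1)] assms(2) in simp_all)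

lemma R0_CC_le_ext_cost:
  assumes ext: "is_extension N2 G \<phi>"
  shows "R0_CC N1 N2 f \<le> real (ceil_log2 G + 4) * (ext_cost R0_query N2 G (Mar N1 N2 f) \<phi> + 1)"
proof -
  define r where "r = ext_cost R0_query N2 G (Mar N1 N2 f) \<phi>"
  define g where "g a = ext_fun N2 \<phi> (marg N1 N2 f a)" for a
  define A where "A = {a. \<exists>b. (a, b) \<in> pdom N1 N2 f}"
  define K where "K = real (ceil_log2 G + 2)"
  define good where "good a P \<longleftrightarrow>
      (\<forall>T\<in>set_pmf P. dt_valid G T \<and> (\<forall>x\<in>qdom G (g a). dt_eval T x = the (g a x))) \<and>
      (\<forall>x\<in>qdom G (g a). integrable (measure_pmf P) (\<lambda>T. real (dt_cost T x)) \<and>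
        measure_pmf.expectation P (\<lambda>T. real (dt_cost T x)) < R0_query G (g a) + 1)" for a P
  define P where "P a = (SOME P. good a P)" for a
  have P: "good a (P a)" for a
    unfolding P_def good_def by (rule someI_ex) (rule R0_query_approx)
  define P' where "P' a = map_pmf (prune (\<lambda>_. None)) (P a)" for a
  have finA: "finite A"
    unfolding A_def by (rule finite_pdom_inputs)
  define PP where "PP = simulate (ceil_log2 G) (\<lambda>(a, n). family_pick A P' n a) (\<lambda>(b, s :: nat). \<phi> b) G []"
  have P': "dt_valid G T \<and> dt_depth T \<le> G \<and> (\<forall>x\<in>qdom G (g a). dt_eval T x = the (g a x))"
    if "T \<in> set_pmf (P' a)" for a T
  proof -
    have "\<forall>T\<in>set_pmf (P a). dt_valid G T \<and> (\<forall>x\<in>qdom G (g a). dt_eval T x = the (g a x))"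
      using P[of a] unfolding good_def by simp
    with that show ?thesis
      unfolding P'_def by (rule set_pmf_map_prune)
  qed
  then have P'_valid: "dt_valid G T \<and> dt_depth T \<le> G" if "T \<in> set_pmf (P' a)" for a T
    using that by blast
  have "measure_pmf.expectation (pair_pmf (family_seed A P') (return_pmf 0))
      (\<lambda>(n, s). real (p_cost PP (a, n) (b, s))) \<le> K * (r + 1) + 2" if ab: "(a, b) \<in> pdom N1 N2 f" for a b
  proof -
    have a: "a \<in> A"
      using ab unfolding A_def by auto
    have x: "\<phi> b \<in> qdom G (g a)"
      using ext_marg_qdom[OF ext ab] unfolding g_def .
    let ?c = "\<lambda>T. real (dt_cost T (\<phi> b))"
    have "measure_pmf.expectation (pair_pmf (family_seed A P') (return_pmf 0))
        (\<lambda>(n, s). real (p_cost PP (a, n) (b, s))) \<le> K * measure_pmf.expectation (P' a) ?c + 2"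
      using simulate_family_expected_cost[where P=P' and d=G and xs="\<lambda>(b, s :: nat). \<phi> b",
          OF finA a le_two_power_ceil_log2[of G] P'_valid]
      unfolding PP_def K_def by simp
    also have "measure_pmf.expectation (P' a) ?c = measure_pmf.expectation (P a) (\<lambda>T. ?c (prune (\<lambda>_. None) T))"
      unfolding P'_def by simp
    also have "\<dots> \<le> measure_pmf.expectation (P a) ?c"
      using P[of a] x unfolding good_def by (intro expectation_pruned_cost_le) auto
    also have "\<dots> < R0_query G (g a) + 1"
      using P[of a] x unfolding good_def by blast
    also have "R0_query G (g a) \<le> r"
      unfolding r_def g_def by (rule marg_cost_le_ext_cost[OF ab])
    finally show ?thesis
      unfolding K_def by (simp add: mult_left_mono)
  qed
  moreover have "p_eval PP (a, n) (b, s) = the (f a b)"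
    if ab: "(a, b) \<in> pdom N1 N2 f" and n: "n \<in> set_pmf (family_seed A P')" for a b n s
  proof -
    have a: "a \<in> A"
      using ab unfolding A_def by auto
    have "family_pick A P' n a \<in> set_pmf (P' a)"
      by (rule family_pick_in_set_pmf[OF finA a n])
    then have "p_eval PP (a, n) (b, s) = the (g a (\<phi> b))"
      using simulate_family_eval_cost[where P=P' and d=G and xs="\<lambda>(b, s :: nat). \<phi> b" and \<beta>="(b, s)",
          OF finA a le_two_power_ceil_log2[of G] P'_valid n] P' ext_marg_qdom[OF ext ab]
      unfolding PP_def g_def by simp
    then show ?thesis
      using ext_marg_value[OF ext ab] unfolding g_def by simp
  qed
  ultimately have "R0_CC N1 N2 f \<le> K * (r + 1) + 2"
    by (intro R0_CC_le_expected_cost[where pA="family_seed A P'" and pB="return_pmf 0"])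
      (auto simp: K_def r_def ext_cost_nonneg finite_Mar)
  also have "\<dots> \<le> real (ceil_log2 G + 4) * (r + 1)"
    using ext_cost_nonneg[OF finite_Mar] unfolding K_def r_def by (simp add: algebra_simps)
  finally show ?thesis
    unfolding r_def .
qed

section \<open>Quantum query algorithms\<close>

definition perm_op :: "('a \<Rightarrow> 'a) \<Rightarrow> 'a \<Rightarrow> 'a \<Rightarrow> complex" where
  "perm_op \<sigma> x y = (if x = \<sigma> y then 1 else 0)"

lemma unitary_on_perm_op:
  assumes "finite B" "\<And>y. y \<in> B \<Longrightarrow> \<sigma> y \<in> B" "inj_on \<sigma> B"
  shows "unitary_on B (perm_op \<sigma>)"
  unfolding unitary_on_def
proof (intro ballI)
  fix x y assume xy: "x \<in> B" "y \<in> B"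
  have "(\<Sum>z\<in>B. cnj (perm_op \<sigma> z x) * perm_op \<sigma> z y) = (\<Sum>z\<in>B. if z = \<sigma> x then (if \<sigma> x = \<sigma> y then 1 else 0) else 0)"
    unfolding perm_op_def by (intro sum.cong) auto
  also have "\<dots> = (if \<sigma> x = \<sigma> y then 1 else 0)" using assms(2)[OF xy(1)] assms(1) by simp
  also have "\<dots> = (if x = y then 1 else 0)" using assms(3) xy by (auto dest: inj_onD)
  finally show "(\<Sum>z\<in>B. cnj (perm_op \<sigma> z x) * perm_op \<sigma> z y) = (if x = y then 1 else 0)" .
qed

definition ket :: "'a \<Rightarrow> 'a \<Rightarrow> complex" where
  "ket k = (\<lambda>k'. if k' = k then 1 else 0)"

lemma qapply_perm_op_ket:
  assumes "finite B" "k \<in> B"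
  shows "qapply B (perm_op \<sigma>) (ket k) = ket (\<sigma> k)"
proof
  fix x
  have "qapply B (perm_op \<sigma>) (ket k) x = (\<Sum>y\<in>B. if y = k then perm_op \<sigma> x k else 0)"
    unfolding qapply_def ket_def by (intro sum.cong) auto
  also have "\<dots> = perm_op \<sigma> x k" using assms by simp
  finally show "qapply B (perm_op \<sigma>) (ket k) x = ket (\<sigma> k) x" unfolding perm_op_def ket_def by simp
qed

lemma qoracle_ket:
  "qoracle x (ket (i, c, w)) = ket (i, c \<noteq> (i < length x \<and> x ! i), w)"
  unfolding qoracle_def ket_def by (auto simp: fun_eq_iff)

lemma finite_qbasis: "finite (qbasis n W)"
proof -
  have "qbasis n W \<subseteq> {..n} \<times> UNIV \<times> {..<W}" unfolding qbasis_def by auto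
  thus ?thesis by (rule finite_subset) auto
qed

text \<open>The \<open>t\<close>-th step of the algorithm that reads its whole input: the answer bit, which holds
  the oracle value \<open>x ! t\<close>, is moved into bit \<open>t\<close> of the workspace and the query index advances
  to \<open>t + 1\<close>.  Swapping with the reverse move makes it a permutation of the basis.\<close>

definition query_step :: "nat \<Rightarrow> nat \<times> bool \<times> nat \<Rightarrow> nat \<times> bool \<times> nat" where
  "query_step t = (\<lambda>(i, c, w). (if i = t then Suc t else if i = Suc t then t else i,
              if c \<noteq> bit w t then \<not> c else c, if c \<noteq> bit w t then flip_bit t w else w))"

lemma flip_bit_flip_bit: "flip_bit t (flip_bit t (w::nat)) = w" by (rule bit_eqI) (auto simp: bit_flip_bit_iff)
lemma bit_flip_bit_same: "bit (flip_bit t (w::nat)) t = (\<not> bit w t)" by (auto simp: bit_flip_bit_iff)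
lemma flip_bit_less_power: "t < n \<Longrightarrow> (w::nat) < 2^n \<Longrightarrow> flip_bit t w < 2^n"
  by (metis take_bit_flip_bit_eq take_bit_nat_eq_self_iff leD)

lemma query_step_involution: "query_step t (query_step t k) = k"
  by (cases k) (auto simp: query_step_def flip_bit_flip_bit bit_flip_bit_same)

lemma query_step_in_qbasis: "t < n \<Longrightarrow> k \<in> qbasis n (2 ^ n) \<Longrightarrow> query_step t k \<in> qbasis n (2 ^ n)"
  by (cases k) (auto simp: query_step_def qbasis_def flip_bit_less_power)

lemma inj_on_query_step: "inj_on (query_step t) B"
  by (metis inj_onI query_step_involution)

lemma qq_rest_query_steps:
  assumes "length x = n"
  shows "t0 \<le> n \<Longrightarrow> w < 2 ^ n \<Longrightarrow> (\<forall>j. bit w j = (j < t0 \<and> x ! j)) \<Longrightarrow>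
    \<exists>wf. wf < 2 ^ n \<and> (\<forall>j. bit wf j = (j < n \<and> x ! j)) \<and>
      qq_rest (qbasis n (2 ^ n)) x (map (\<lambda>t. perm_op (query_step t)) [t0..<n]) (ket (t0, False, w)) = ket (n, False, wf)"
proof (induction "n - t0" arbitrary: t0 w)
  case 0
  hence "t0 = n" by simp
  then show ?case using 0 by (intro exI[of _ w]) simp
next
  case (Suc d)
  have lt: "t0 < n" using Suc.hyps by simp
  have ups: "[t0..<n] = t0 # [Suc t0..<n]" using lt by (simp add: upt_conv_Cons)
  define w' where "w' = (if x ! t0 then flip_bit t0 w else w)"
  have bw: "\<not> bit w t0" using Suc.prems(3) by simp
  have o: "qoracle x (ket (t0, False, w)) = ket (t0, x ! t0, w)"
    using qoracle_ket[of x t0 False w] lt assms by simp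
  have inB: "(t0, x ! t0, w) \<in> qbasis n (2 ^ n)" using lt Suc.prems unfolding qbasis_def by auto
  have s: "query_step t0 (t0, x ! t0, w) = (Suc t0, False, w')"
    unfolding query_step_def w'_def using bw by auto
  have ap: "qapply (qbasis n (2 ^ n)) (perm_op (query_step t0)) (qoracle x (ket (t0, False, w))) = ket (Suc t0, False, w')"
    unfolding o using qapply_perm_op_ket[OF finite_qbasis inB] s by simp
  have w'lt: "w' < 2 ^ n" unfolding w'_def using Suc.prems lt flip_bit_less_power by auto
  have w'b: "\<forall>j. bit w' j = (j < Suc t0 \<and> x ! j)"
  proof
    fix j
    show "bit w' j = (j < Suc t0 \<and> x ! j)"
      using Suc.prems(3) unfolding w'_def by (cases "j = t0") (auto simp: bit_flip_bit_iff less_Suc_eq)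
  qed
  have "n - Suc t0 = d"
    using Suc.hyps(2) by simp
  from Suc.hyps(1)[OF this[symmetric] _ w'lt w'b] lt
  obtain wf where "wf < 2 ^ n" "\<forall>j. bit wf j = (j < n \<and> x ! j)"
    "qq_rest (qbasis n (2 ^ n)) x (map (\<lambda>t. perm_op (query_step t)) [Suc t0..<n]) (ket (Suc t0, False, w'))
      = ket (n, False, wf)"
    by auto
  then show ?case
    unfolding ups using ap by auto
qed

definition q_algorithm ::
    "nat \<Rightarrow> (bool list \<Rightarrow> bool option) \<Rightarrow> nat \<Rightarrow> (nat \<times> bool \<times> nat \<Rightarrow> nat \<times> bool \<times> nat \<Rightarrow> complex) \<Rightarrow>
     (nat \<times> bool \<times> nat \<Rightarrow> nat \<times> bool \<times> nat \<Rightarrow> complex) list \<Rightarrow> (nat \<times> bool \<times> nat \<Rightarrow> bool) \<Rightarrow> bool" where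
  "q_algorithm n g W U0 Us out \<longleftrightarrow>
     0 < W \<and> unitary_on (qbasis n W) U0 \<and> (\<forall>U\<in>set Us. unitary_on (qbasis n W) U) \<and>
     (\<forall>x\<in>qdom n g. (\<Sum>k\<in>{k\<in>qbasis n W. out k = the (g x)}. (cmod (qq_final (qbasis n W) x U0 Us k))\<^sup>2) \<ge> 2/3)"

lemma ex_q_algorithm: "\<exists>W U0 Us out. q_algorithm n g W U0 Us out \<and> length Us = n"
  unfolding q_algorithm_def
proof (intro exI conjI)
  let ?B = "qbasis n (2 ^ n)"
  let ?Us = "map (\<lambda>t. perm_op (query_step t)) [0..<n]"
  let ?out = "\<lambda>(i :: nat, c :: bool, w :: nat). (case g (map (bit w) [0..<n]) of Some v \<Rightarrow> v | None \<Rightarrow> False)"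
  show "0 < (2::nat) ^ n" by simp
  show "length ?Us = n" by simp
  show "unitary_on ?B (perm_op id)" by (rule unitary_on_perm_op) (auto simp: finite_qbasis)
  show "\<forall>U\<in>set ?Us. unitary_on ?B U"
  proof
    fix U assume "U \<in> set ?Us"
    then obtain t where t: "t < n" "U = perm_op (query_step t)" by auto
    show "unitary_on ?B U" unfolding t(2) by (rule unitary_on_perm_op) (auto simp: finite_qbasis query_step_in_qbasis[OF t(1)] inj_on_query_step)
  qed
  show "\<forall>x\<in>qdom n g. (\<Sum>k\<in>{k\<in>?B. ?out k = the (g x)}. (cmod (qq_final ?B x (perm_op id) ?Us k))\<^sup>2) \<ge> 2/3"
  proof
    fix x assume x: "x \<in> qdom n g"
    have lx: "length x = n" using x unfolding qdom_def by simp
    obtain v where gv: "g x = Some v" using x unfolding qdom_def by auto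
    have z: "(0, False, 0) \<in> ?B" unfolding qbasis_def by simp
    have "(\<lambda>k. if k = (0::nat, False, 0::nat) then 1 else (0::complex)) = ket (0, False, 0)"
      unfolding ket_def by auto
    hence st: "qapply ?B (perm_op id) (\<lambda>k. if k = (0, False, 0) then 1 else 0) = ket (0, False, 0)"
      using qapply_perm_op_ket[OF finite_qbasis z, of id] by simp
    obtain wf where wf: "wf < 2 ^ n" "\<forall>j. bit wf j = (j < n \<and> x ! j)"
      "qq_rest ?B x ?Us (ket (0, False, 0)) = ket (n, False, wf)"
      using qq_rest_query_steps[OF lx, of 0 0] by auto
    have fin: "qq_final ?B x (perm_op id) ?Us = ket (n, False, wf)"
      unfolding qq_final_def st using wf(3) .
    have mx: "map (bit wf) [0..<n] = x" using wf(2) lx by (intro nth_equalityI) auto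
    have inK: "(n, False, wf) \<in> {k\<in>?B. ?out k = the (g x)}" using wf(1) mx gv unfolding qbasis_def by auto
    have "(\<Sum>k\<in>{k\<in>?B. ?out k = the (g x)}. (cmod (qq_final ?B x (perm_op id) ?Us k))\<^sup>2)
        = (\<Sum>k\<in>{k\<in>?B. ?out k = the (g x)}. if k = (n, False, wf) then 1 else 0)"
      unfolding fin ket_def by (intro sum.cong) auto
    also have "\<dots> = 1" using inK finite_qbasis by simp
    finally show "(\<Sum>k\<in>{k\<in>?B. ?out k = the (g x)}. (cmod (qq_final ?B x (perm_op id) ?Us k))\<^sup>2) \<ge> 2/3" by simp
  qed
qed

definition embed_state :: "'k set \<Rightarrow> ('k \<Rightarrow> bool list) \<Rightarrow> ('k \<Rightarrow> complex) \<Rightarrow> bool list \<Rightarrow> complex" where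
  "embed_state B e \<psi> xs = (if xs \<in> e ` B then \<psi> (inv_into B e xs) else 0)"

definition embed_op :: "'k set \<Rightarrow> ('k \<Rightarrow> bool list) \<Rightarrow> ('k \<Rightarrow> 'k \<Rightarrow> complex) \<Rightarrow> bool list \<Rightarrow> bool list \<Rightarrow> complex" where
  "embed_op B e U xs ys = (if xs \<in> e ` B \<and> ys \<in> e ` B then U (inv_into B e xs) (inv_into B e ys) else if xs = ys then 1 else 0)"

lemma finite_qbits: "finite (qbits m)"
  unfolding qbits_def by (rule finite_bool_lists)

lemma sum_qbits_image:
  assumes "finite B" "inj_on e B" "e ` B \<subseteq> qbits m" "\<And>y. y \<in> qbits m \<Longrightarrow> y \<notin> e ` B \<Longrightarrow> F y = 0"
  shows "(\<Sum>y\<in>qbits m. F y) = (\<Sum>k\<in>B. F (e k))"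
proof -
  have "(\<Sum>y\<in>qbits m. F y) = (\<Sum>y\<in>e ` B. F y)"
    by (rule sum.mono_neutral_right[OF finite_qbits assms(3)]) (use assms(4) in auto)
  also have "\<dots> = (\<Sum>k\<in>B. F (e k))" using assms(2) by (rule sum.reindex[unfolded comp_def])
  finally show ?thesis .
qed

lemma qapply_embed_op:
  assumes "finite B" "inj_on e B" "e ` B \<subseteq> qbits m"
  shows "qapply (qbits m) (embed_op B e U) (embed_state B e \<psi>) = embed_state B e (qapply B U \<psi>)"
proof
  fix x
  have "qapply (qbits m) (embed_op B e U) (embed_state B e \<psi>) x = (\<Sum>k\<in>B. embed_op B e U x (e k) * embed_state B e \<psi> (e k))"
    unfolding qapply_def by (rule sum_qbits_image[OF assms]) (simp add: embed_state_def)
  also have "\<dots> = (\<Sum>k\<in>B. embed_op B e U x (e k) * \<psi> k)"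
    using assms(2) by (intro sum.cong) (auto simp: embed_state_def)
  also have "\<dots> = embed_state B e (qapply B U \<psi>) x"
  proof (cases "x \<in> e ` B")
    case True
    then show ?thesis using assms(2) by (simp add: embed_op_def embed_state_def qapply_def inv_into_f_f)
  next
    case False
    then show ?thesis unfolding embed_op_def embed_state_def by (auto intro!: sum.neutral)
  qed
  finally show "qapply (qbits m) (embed_op B e U) (embed_state B e \<psi>) x = embed_state B e (qapply B U \<psi>) x" .
qed

lemma unitary_on_embed_op:
  assumes "finite B" "inj_on e B" "e ` B \<subseteq> qbits m" "unitary_on B U"
  shows "unitary_on (qbits m) (embed_op B e U)"
  unfolding unitary_on_def
proof (intro ballI)
  fix x y assume x: "x \<in> qbits m" and y: "y \<in> qbits m"
  let ?I = "e ` B"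
  show "(\<Sum>z\<in>qbits m. cnj (embed_op B e U z x) * embed_op B e U z y) = (if x = y then 1 else 0)"
  proof (cases "x \<in> ?I")
    case xI: True
    show ?thesis
    proof (cases "y \<in> ?I")
      case yI: True
      have "(\<Sum>z\<in>qbits m. cnj (embed_op B e U z x) * embed_op B e U z y) = (\<Sum>k\<in>B. cnj (embed_op B e U (e k) x) * embed_op B e U (e k) y)"
        by (rule sum_qbits_image[OF assms(1-3)]) (use xI yI in \<open>auto simp: embed_op_def\<close>)
      also have "\<dots> = (\<Sum>k\<in>B. cnj (U k (inv_into B e x)) * U k (inv_into B e y))"
        using xI yI assms(2) by (intro sum.cong) (auto simp: embed_op_def inv_into_f_f)
      also have "\<dots> = (if inv_into B e x = inv_into B e y then 1 else 0)"
      proof -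
        have "inv_into B e x \<in> B" "inv_into B e y \<in> B" using xI yI by (auto intro: inv_into_into)
        thus ?thesis using assms(4) unfolding unitary_on_def by blast
      qed
      also have "\<dots> = (if x = y then 1 else 0)" using xI yI by (metis f_inv_into_f)
      finally show ?thesis .
    next
      case yI: False
      have "(\<Sum>z\<in>qbits m. cnj (embed_op B e U z x) * embed_op B e U z y) = 0"
        by (rule sum.neutral) (use xI yI in \<open>auto simp: embed_op_def\<close>)
      thus ?thesis using xI yI by auto
    qed
  next
    case xI: False
    show ?thesis
    proof (cases "y \<in> ?I")
      case yI: True
      have "(\<Sum>z\<in>qbits m. cnj (embed_op B e U z x) * embed_op B e U z y) = 0"
        by (rule sum.neutral) (use xI yI in \<open>auto simp: embed_op_def\<close>)
      thus ?thesis using xI yI by auto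
    next
      case yI: False
      have "(\<Sum>z\<in>qbits m. cnj (embed_op B e U z x) * embed_op B e U z y) = (\<Sum>z\<in>qbits m. if z = x then (if x = y then 1 else 0) else 0)"
        by (intro sum.cong) (use xI yI in \<open>auto simp: embed_op_def\<close>)
      also have "\<dots> = (if x = y then 1 else 0)" using x finite_qbits by simp
      finally show ?thesis .
    qed
  qed
qed

lemma qapply_perm_op_qbits:
  assumes "\<And>xs. length (\<sigma> xs) = length xs" "\<And>xs. \<sigma> (\<sigma> xs) = xs"
  shows "qapply (qbits m) (perm_op \<sigma>) \<Psi> = (\<lambda>xs. if length xs = m then \<Psi> (\<sigma> xs) else 0)"
proof
  fix x
  show "qapply (qbits m) (perm_op \<sigma>) \<Psi> x = (if length x = m then \<Psi> (\<sigma> x) else 0)"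
  proof (cases "length x = m")
    case True
    have "qapply (qbits m) (perm_op \<sigma>) \<Psi> x = (\<Sum>y\<in>qbits m. if y = \<sigma> x then \<Psi> y else 0)"
      unfolding qapply_def perm_op_def
    proof (intro sum.cong refl)
      fix y
      have "x = \<sigma> y \<longleftrightarrow> y = \<sigma> x" using assms(2) by metis
      thus "(if x = \<sigma> y then 1 else 0) * \<Psi> y = (if y = \<sigma> x then \<Psi> y else 0)" by simp
    qed
    also have "\<dots> = \<Psi> (\<sigma> x)"
    proof -
      have "\<sigma> x \<in> qbits m" using True assms(1)[of x] by (simp add: qbits_def)
      thus ?thesis using finite_qbits[of m] by (simp add: sum.delta)
    qed
    finally show ?thesis using True by simp
  next
    case False
    have "qapply (qbits m) (perm_op \<sigma>) \<Psi> x = 0"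
      unfolding qapply_def perm_op_def using False assms(1) by (intro sum.neutral) (auto simp: qbits_def)
    thus ?thesis using False by simp
  qed
qed

lemma unitary_on_perm_op_qbits:
  assumes "\<And>xs. length (\<sigma> xs) = length xs" "\<And>xs. \<sigma> (\<sigma> xs) = xs"
  shows "unitary_on (qbits m) (perm_op \<sigma>)"
proof (rule unitary_on_perm_op[OF finite_qbits])
  show "inj_on \<sigma> (qbits m)" by (rule inj_onI) (metis assms(2))
qed (auto simp: qbits_def assms)

lemma perm_embed_state:
  assumes "\<And>xs. length (\<sigma> xs) = length xs" "\<And>xs. \<sigma> (\<sigma> xs) = xs"
    and inj: "inj_on e B" and img: "e ` B \<subseteq> qbits m"
    and tau: "\<And>k. k \<in> B \<Longrightarrow> \<tau> k \<in> B \<and> \<sigma> (e k) = e (\<tau> k)"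
  shows "(\<lambda>xs. if length xs = m then embed_state B e \<psi> (\<sigma> xs) else 0) = embed_state B e (\<lambda>k. \<psi> (\<tau> k))"
proof
  fix xs
  show "(if length xs = m then embed_state B e \<psi> (\<sigma> xs) else 0) = embed_state B e (\<lambda>k. \<psi> (\<tau> k)) xs"
  proof (cases "xs \<in> e ` B")
    case True
    then obtain k where k: "k \<in> B" "xs = e k" by auto
    have "length xs = m" using img k by (auto simp: qbits_def)
    moreover have "\<sigma> xs = e (\<tau> k)" "\<tau> k \<in> B" using tau k by auto
    ultimately show ?thesis using k inj unfolding embed_state_def by auto
  next
    case False
    have "\<sigma> xs \<notin> e ` B"
    proof
      assume "\<sigma> xs \<in> e ` B"
      then obtain k where k: "k \<in> B" "\<sigma> xs = e k" by auto
      hence "xs = e (\<tau> k)" using tau[OF k(1)] assms(2) by metis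
      thus False using False tau k by auto
    qed
    thus ?thesis using False unfolding embed_state_def by auto
  qed
qed

lemma sum_norm_embed_state_perm:
  assumes "finite X" "inj_on e B" "inj_on h B" "\<And>xs. \<sigma> (\<sigma> xs) = xs" "\<And>k. k \<in> B \<Longrightarrow> \<sigma> (e k) = h k"
  shows "(\<Sum>xs\<in>X. (cmod (embed_state B e s (\<sigma> xs)))\<^sup>2) = (\<Sum>k\<in>{k\<in>B. h k \<in> X}. (cmod (s k))\<^sup>2)"
proof -
  let ?K = "{k\<in>B. h k \<in> X}"
  let ?F = "\<lambda>xs. (cmod (embed_state B e s (\<sigma> xs)))\<^sup>2"
  have "(\<Sum>xs\<in>X. ?F xs) = (\<Sum>xs\<in>h ` ?K. ?F xs)"
  proof (rule sum.mono_neutral_right[OF assms(1)])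
    show "\<forall>xs\<in>X - h ` ?K. ?F xs = 0"
    proof
      fix xs assume xs: "xs \<in> X - h ` ?K"
      have "\<sigma> xs \<notin> e ` B"
      proof
        assume "\<sigma> xs \<in> e ` B"
        then obtain k where "k \<in> B" "\<sigma> xs = e k"
          by auto
        then have "k \<in> B" "xs = h k"
          using assms(4,5) by metis+
        then show False
          using xs by auto
      qed
      then show "?F xs = 0"
        unfolding embed_state_def by simp
    qed
  qed auto
  also have "\<dots> = (\<Sum>k\<in>?K. ?F (h k))"
    using assms(3) by (intro sum.reindex[unfolded comp_def]) (auto intro: inj_on_subset)
  also have "\<dots> = (\<Sum>k\<in>?K. (cmod (s k))\<^sup>2)"
  proof (intro sum.cong refl)
    fix k assume "k \<in> ?K"
    then have "k \<in> B" "\<sigma> (h k) = e k"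
      using assms(4,5) by (metis (mono_tags, lifting) mem_Collect_eq)+
    then show "?F (h k) = (cmod (s k))\<^sup>2"
      unfolding embed_state_def using assms(2) by simp
  qed
  finally show ?thesis .
qed

lemma qapply_id_embed_state:
  assumes "inj_on e B" "e ` B \<subseteq> qbits m"
  shows "qapply (qbits m) (perm_op id) (embed_state B e \<psi>) = embed_state B e \<psi>"
  using qapply_perm_op_qbits[of id m] perm_embed_state[of id e B m "\<lambda>k. k" \<psi>] assms by simp

definition flip_if :: "(bool list \<Rightarrow> bool) \<Rightarrow> nat \<Rightarrow> bool list \<Rightarrow> bool list" where
  "flip_if C p xs = (if C xs then xs[p := \<not> xs ! p] else xs)"

lemma length_flip_if[simp]: "length (flip_if C p xs) = length xs"
  unfolding flip_if_def by simp

lemma flip_if_involution: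
  assumes "\<And>xs v. C (xs[p := v]) = C xs"
  shows "flip_if C p (flip_if C p xs) = xs"
  unfolding flip_if_def using assms by (cases "p < length xs") (auto simp: list_update_beyond)

lemma nth_flip_if: "p < length xs \<Longrightarrow> flip_if C p xs ! j = (if C xs \<and> j = p then \<not> xs ! p else xs ! j)"
  unfolding flip_if_def by auto

lemma local_on_all: "local_on m {j. j < m} U"
  unfolding local_on_def qbits_def
  by (auto intro!: arg_cong2[where f=U] nth_equalityI)

lemma local_on_flip_if:
  assumes pS: "p \<in> S" and pm: "p < m"
    and dep: "\<And>xs ys. xs \<in> qbits m \<Longrightarrow> ys \<in> qbits m \<Longrightarrow> (\<forall>j<m. j \<in> S \<longrightarrow> xs ! j = ys ! j) \<Longrightarrow> C xs = C ys"
  shows "local_on m S (perm_op (flip_if C p))"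
  unfolding local_on_def
proof (intro conjI ballI impI)
  fix x y assume x: "x \<in> qbits m" and y: "y \<in> qbits m" and d: "\<exists>j<m. j \<notin> S \<and> x ! j \<noteq> y ! j"
  then obtain j where j: "j < m" "j \<notin> S" "x ! j \<noteq> y ! j" by auto
  have "x \<noteq> flip_if C p y"
  proof
    assume "x = flip_if C p y"
    moreover have jp: "j \<noteq> p" using j(2) pS by auto
    moreover have "flip_if C p y ! j = y ! j" using nth_flip_if[of p y C j] pm y jp by (simp add: qbits_def)
    ultimately have "x ! j = y ! j" by simp
    thus False using j by simp
  qed
  thus "perm_op (flip_if C p) x y = 0" unfolding perm_op_def by simp
next
  fix x y x' y' assume x: "x \<in> qbits m" and y: "y \<in> qbits m" and x': "x' \<in> qbits m" and y': "y' \<in> qbits m"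
    and H: "(\<forall>j<m. j \<notin> S \<longrightarrow> x ! j = y ! j \<and> x' ! j = y' ! j) \<and> (\<forall>j<m. j \<in> S \<longrightarrow> x ! j = x' ! j \<and> y ! j = y' ! j)"
  have Cy: "C y = C y'" using dep[OF y y'] H by auto
  have eq1: "(x = flip_if C p y) \<longleftrightarrow> (\<forall>j<m. j \<in> S \<longrightarrow> x ! j = (if C y \<and> j = p then \<not> y ! p else y ! j))"
  proof -
    have "(x = flip_if C p y) \<longleftrightarrow> (\<forall>j<m. x ! j = flip_if C p y ! j)"
      using x y by (auto simp: qbits_def list_eq_iff_nth_eq)
    also have "\<dots> \<longleftrightarrow> (\<forall>j<m. j \<in> S \<longrightarrow> x ! j = (if C y \<and> j = p then \<not> y ! p else y ! j))"
      using H pS pm y by (auto simp: nth_flip_if qbits_def)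
    finally show ?thesis .
  qed
  have eq2: "(x' = flip_if C p y') \<longleftrightarrow> (\<forall>j<m. j \<in> S \<longrightarrow> x' ! j = (if C y' \<and> j = p then \<not> y' ! p else y' ! j))"
  proof -
    have "(x' = flip_if C p y') \<longleftrightarrow> (\<forall>j<m. x' ! j = flip_if C p y' ! j)"
      using x' y' by (auto simp: qbits_def list_eq_iff_nth_eq)
    also have "\<dots> \<longleftrightarrow> (\<forall>j<m. j \<in> S \<longrightarrow> x' ! j = (if C y' \<and> j = p then \<not> y' ! p else y' ! j))"
      using H pS pm y' by (auto simp: nth_flip_if qbits_def)
    finally show ?thesis .
  qed
  have "(x = flip_if C p y) \<longleftrightarrow> (x' = flip_if C p y')"
    unfolding eq1 eq2 using H Cy pS pm by auto
  thus "perm_op (flip_if C p) x y = perm_op (flip_if C p) x' y'" unfolding perm_op_def by simp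
qed

text \<open>A basis state \<open>(i, c, w)\<close> of the query algorithm is stored in \<open>lI + kW + 3\<close> qubits as
  [flag, \<open>i\<close> in \<open>lI\<close> bits, \<open>c\<close>, \<open>w\<close> in \<open>kW\<close> bits, output]; the flag is set exactly while a query is
  being answered, and the output qubit receives the result at the end.\<close>

fun bin :: "nat \<Rightarrow> nat \<Rightarrow> bool list" where
  "bin 0 v = []"
| "bin (Suc l) v = odd v # bin l (v div 2)"

lemma length_bin[simp]: "length (bin l v) = l"
  by (induction l arbitrary: v) auto

lemma bin_inj: "v < 2 ^ l \<Longrightarrow> v' < 2 ^ l \<Longrightarrow> bin l v = bin l v' \<Longrightarrow> v = v'"
proof (induction l arbitrary: v v')
  case 0 then show ?case by simp
next
  case (Suc l)
  have "v div 2 = v' div 2" using Suc by (intro Suc.IH) auto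
  moreover have "odd v = odd v'" using Suc.prems by simp
  ultimately show ?case by (metis div_mult_mod_eq odd_iff_mod_2_eq_one mod2_eq_if)
qed

lemma bin_zero: "bin l 0 = replicate l False"
  by (induction l) auto

definition encode_core :: "nat \<Rightarrow> nat \<Rightarrow> nat \<times> bool \<times> nat \<Rightarrow> bool list" where
  "encode_core lI kW = (\<lambda>(i, c, w). False # bin lI i @ c # bin kW w)"

definition encode :: "nat \<Rightarrow> nat \<Rightarrow> nat \<times> bool \<times> nat \<Rightarrow> bool list" where
  "encode lI kW k = encode_core lI kW k @ [False]"

lemma length_encode_core[simp]: "length (encode_core lI kW k) = lI + kW + 2"
  by (cases k) (simp add: encode_core_def)

lemma length_encode[simp]: "length (encode lI kW k) = lI + kW + 3"
  by (simp add: encode_def)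

lemma inj_on_encode_core:
  assumes "G < 2 ^ lI" "W \<le> 2 ^ kW"
  shows "inj_on (encode_core lI kW) (qbasis G W)"
proof (rule inj_onI)
  fix k k' assume k: "k \<in> qbasis G W" and k': "k' \<in> qbasis G W" and eq: "encode_core lI kW k = encode_core lI kW k'"
  obtain i c w where kk: "k = (i, c, w)" by (cases k) auto
  obtain i' c' w' where kk': "k' = (i', c', w')" by (cases k') auto
  have r: "i < 2 ^ lI" "i' < 2 ^ lI" "w < 2 ^ kW" "w' < 2 ^ kW"
    using k k' kk kk' assms unfolding qbasis_def by auto
  have "bin lI i @ c # bin kW w = bin lI i' @ c' # bin kW w'" using eq kk kk' by (simp add: encode_core_def)
  hence "bin lI i = bin lI i' \<and> c # bin kW w = c' # bin kW w'" by (simp add: append_eq_append_conv)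
  hence "i = i'" "c = c'" "w = w'" using bin_inj r by auto
  thus "k = k'" using kk kk' by simp
qed

lemma inj_on_encode:
  assumes "G < 2 ^ lI" "W \<le> 2 ^ kW"
  shows "inj_on (encode lI kW) (qbasis G W)"
  using inj_on_encode_core[OF assms] unfolding encode_def inj_on_def by simp

lemma encode_image_qbits: "encode lI kW ` B \<subseteq> qbits (lI + kW + 3)"
  by (auto simp: qbits_def)

definition flip_flag :: "bool list \<Rightarrow> bool list" where "flip_flag = flip_if (\<lambda>_. True) 0"

definition oracle_flip :: "nat \<Rightarrow> nat \<Rightarrow> bool list \<Rightarrow> bool list \<Rightarrow> bool list" where
  "oracle_flip lI G x = flip_if (\<lambda>xs. xs ! 0 \<and> (\<exists>i<G. take lI (drop 1 xs) = bin lI i \<and> x ! i)) (Suc lI)"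

definition copy_output :: "'k set \<Rightarrow> ('k \<Rightarrow> bool list) \<Rightarrow> ('k \<Rightarrow> bool) \<Rightarrow> nat \<Rightarrow> bool list \<Rightarrow> bool list" where
  "copy_output B e out p = flip_if (\<lambda>xs. \<exists>k\<in>B. take p xs = take p (e k) \<and> out k) p"

lemma flip_flag_involution: "flip_flag (flip_flag xs) = xs" unfolding flip_flag_def by (rule flip_if_involution) simp
lemma length_flip_flag[simp]: "length (flip_flag xs) = length xs" unfolding flip_flag_def by simp

lemma take_drop_list_update: "take lI (drop (Suc 0) (xs[Suc lI := v])) = take lI (drop (Suc 0) xs)"
  by (cases xs) (auto simp: take_update_cancel)

lemma oracle_flip_involution: "oracle_flip lI G x (oracle_flip lI G x xs) = xs"
  unfolding oracle_flip_def by (rule flip_if_involution) (simp add: take_drop_list_update)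
lemma length_oracle_flip[simp]: "length (oracle_flip lI G x xs) = length xs" unfolding oracle_flip_def by simp

lemma copy_output_involution: "copy_output B e out p (copy_output B e out p xs) = xs"
  unfolding copy_output_def by (rule flip_if_involution) (simp add: take_update_cancel)
lemma length_copy_output[simp]: "length (copy_output B e out p xs) = length xs" unfolding copy_output_def by simp

lemma flip_flag_encode: "flip_flag (encode lI kW (i, c, w)) = True # bin lI i @ c # bin kW w @ [False]"
  unfolding flip_flag_def flip_if_def encode_def encode_core_def by simp

lemma flip_flag_True: "flip_flag (True # R) = False # R"
  unfolding flip_flag_def flip_if_def by simp

lemma oracle_flip_active:
  assumes "i < 2 ^ lI" "G \<le> 2 ^ lI"
  shows "oracle_flip lI G x (True # bin lI i @ c # R) = True # bin lI i @ (c \<noteq> (i < G \<and> x ! i)) # R"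
proof -
  have C: "(\<exists>i'<G. take lI (drop 1 (True # bin lI i @ c # R)) = bin lI i' \<and> x ! i') \<longleftrightarrow> (i < G \<and> x ! i)"
  proof
    assume "\<exists>i'<G. take lI (drop 1 (True # bin lI i @ c # R)) = bin lI i' \<and> x ! i'"
    then obtain i' where "i' < G" "bin lI i = bin lI i'" "x ! i'" by auto
    moreover hence "i = i'" using assms by (intro bin_inj) auto
    ultimately show "i < G \<and> x ! i" by simp
  qed auto
  have u: "(True # bin lI i @ c # R)[Suc lI := v] = True # bin lI i @ v # R" for v
    using list_update_length[of "bin lI i" c R v] by simp
  have n: "(True # bin lI i @ c # R) ! Suc lI = c"
    using nth_append_length[of "bin lI i" c R] by simp
  show ?thesis unfolding oracle_flip_def flip_if_def using C u n by auto
qed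

lemma oracle_flip_idle: "oracle_flip lI G x (encode lI kW k) = encode lI kW k"
  unfolding oracle_flip_def flip_if_def encode_def encode_core_def by (cases k) auto

lemma copy_output_encode:
  assumes inj: "inj_on (encode_core lI kW) B" and k: "k \<in> B"
  shows "copy_output B (encode lI kW) out (lI + kW + 2) (encode lI kW k) = encode_core lI kW k @ [out k]"
proof -
  have tk: "take (lI + kW + 2) (encode lI kW k') = encode_core lI kW k'" for k'
    unfolding encode_def using length_encode_core[of lI kW k'] by simp
  have C: "(\<exists>k'\<in>B. take (lI + kW + 2) (encode lI kW k) = take (lI + kW + 2) (encode lI kW k') \<and> out k') \<longleftrightarrow> out k"
    unfolding tk using inj k by (auto dest: inj_onD)
  have u: "(encode lI kW k)[lI + kW + 2 := v] = encode_core lI kW k @ [v]" for v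
    unfolding encode_def using list_update_length[of "encode_core lI kW k" False "[]" v] by simp
  have n: "encode lI kW k ! (lI + kW + 2) = False"
    unfolding encode_def using nth_append_length[of "encode_core lI kW k" False "[]"] by simp
  show ?thesis unfolding copy_output_def flip_if_def using C u n by (cases "out k") (auto simp: encode_def)
qed

lemma oracle_round_embed:
  assumes GlI: "G < 2 ^ lI" and WkW: "W \<le> 2 ^ kW" and lx: "length x = G"
  shows "qapply (qbits (lI + kW + 3)) (perm_op flip_flag) (qapply (qbits (lI + kW + 3)) (perm_op (oracle_flip lI G x))
           (qapply (qbits (lI + kW + 3)) (perm_op flip_flag) (embed_state (qbasis G W) (encode lI kW) \<psi>)))
         = embed_state (qbasis G W) (encode lI kW) (qoracle x \<psi>)"
proof -
  let ?m = "lI + kW + 3"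
  let ?B = "qbasis G W"
  let ?\<sigma> = "\<lambda>xs. flip_flag (oracle_flip lI G x (flip_flag xs))"
  let ?\<tau> = "\<lambda>(i :: nat, c :: bool, w :: nat). (i, c \<noteq> (i < G \<and> x ! i), w)"
  have "qapply (qbits ?m) (perm_op flip_flag) (qapply (qbits ?m) (perm_op (oracle_flip lI G x))
           (qapply (qbits ?m) (perm_op flip_flag) (embed_state ?B (encode lI kW) \<psi>)))
        = (\<lambda>xs. if length xs = ?m then embed_state ?B (encode lI kW) \<psi> (?\<sigma> xs) else 0)"
    unfolding qapply_perm_op_qbits[OF length_flip_flag flip_flag_involution] qapply_perm_op_qbits[OF length_oracle_flip oracle_flip_involution] by (simp cong: if_cong)
  also have "\<dots> = embed_state ?B (encode lI kW) (\<lambda>k. \<psi> (?\<tau> k))"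
  proof (rule perm_embed_state)
    show "length (?\<sigma> xs) = length xs" for xs by simp
    show "?\<sigma> (?\<sigma> xs) = xs" for xs by (simp add: flip_flag_involution oracle_flip_involution)
    show "inj_on (encode lI kW) ?B" by (rule inj_on_encode[OF GlI WkW])
    show "encode lI kW ` ?B \<subseteq> qbits ?m" by (rule encode_image_qbits)
    fix k assume k: "k \<in> ?B"
    obtain i c w where kk: "k = (i, c, w)" by (cases k) auto
    have i: "i < 2 ^ lI" using k kk GlI unfolding qbasis_def by auto
    have "?\<sigma> (encode lI kW k) = flip_flag (oracle_flip lI G x (True # bin lI i @ c # bin kW w @ [False]))"
      unfolding kk flip_flag_encode by simp
    also have "\<dots> = flip_flag (True # bin lI i @ (c \<noteq> (i < G \<and> x ! i)) # bin kW w @ [False])"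
      by (subst oracle_flip_active[OF i less_imp_le[OF GlI]]) (rule refl)
    also have "\<dots> = encode lI kW (?\<tau> k)"
      unfolding kk flip_flag_True by (simp add: encode_def encode_core_def)
    finally show "?\<tau> k \<in> ?B \<and> ?\<sigma> (encode lI kW k) = encode lI kW (?\<tau> k)"
      using k kk unfolding qbasis_def by simp
  qed
  also have "(\<lambda>k. \<psi> (?\<tau> k)) = qoracle x \<psi>"
    unfolding qoracle_def using lx by auto
  finally show ?thesis .
qed

lemma idle_round_embed:
  assumes GlI: "G < 2 ^ lI" and WkW: "W \<le> 2 ^ kW"
  shows "qapply (qbits (lI + kW + 3)) (perm_op id) (qapply (qbits (lI + kW + 3)) (perm_op (oracle_flip lI G x))
           (qapply (qbits (lI + kW + 3)) (perm_op id) (embed_state (qbasis G W) (encode lI kW) \<psi>)))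
         = embed_state (qbasis G W) (encode lI kW) \<psi>"
proof -
  have inj: "inj_on (encode lI kW) (qbasis G W)" by (rule inj_on_encode[OF GlI WkW])
  have o: "qapply (qbits (lI + kW + 3)) (perm_op (oracle_flip lI G x)) (embed_state (qbasis G W) (encode lI kW) \<psi>) = embed_state (qbasis G W) (encode lI kW) \<psi>"
  proof -
    have "qapply (qbits (lI + kW + 3)) (perm_op (oracle_flip lI G x)) (embed_state (qbasis G W) (encode lI kW) \<psi>)
       = (\<lambda>xs. if length xs = lI + kW + 3 then embed_state (qbasis G W) (encode lI kW) \<psi> (oracle_flip lI G x xs) else 0)"
      by (rule qapply_perm_op_qbits[OF length_oracle_flip oracle_flip_involution])
    also have "\<dots> = embed_state (qbasis G W) (encode lI kW) (\<lambda>k. \<psi> k)"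
      by (rule perm_embed_state[OF length_oracle_flip oracle_flip_involution inj encode_image_qbits]) (simp add: oracle_flip_idle)
    finally show ?thesis by simp
  qed
  show ?thesis using qapply_id_embed_state[OF inj encode_image_qbits] o by simp
qed

lemma qcc_run_append: "qcc_run m (xs @ ys) a b \<psi> = qcc_run m ys a b (qcc_run m xs a b \<psi>)"
  by (induction m xs a b \<psi> rule: qcc_run.induct) auto

text \<open>The state of the query algorithm \<open>Ua = U0 # Us\<close> after \<open>t\<close> steps, padded with idle steps so
  that every input of Alice uses the same number of rounds.\<close>

fun padded_state :: "(nat \<times> bool \<times> nat) set \<Rightarrow> bool list \<Rightarrow> (nat \<times> bool \<times> nat \<Rightarrow> nat \<times> bool \<times> nat \<Rightarrow> complex) list \<Rightarrow> nat \<Rightarrow> (nat \<times> bool \<times> nat \<Rightarrow> complex)" where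
  "padded_state B x Ua 0 = ket (0, False, 0)"
| "padded_state B x Ua (Suc t) = (if Suc t < length Ua then qoracle x (qapply B (Ua ! t) (padded_state B x Ua t))
      else if Suc t = length Ua then qapply B (Ua ! t) (padded_state B x Ua t) else padded_state B x Ua t)"

lemma padded_state_qq_final:
  "t < length (U0 # Us) \<Longrightarrow> qq_rest B x (drop t Us) (qapply B ((U0 # Us) ! t) (padded_state B x (U0 # Us) t)) = qq_final B x U0 Us"
proof (induction t)
  case 0
  show ?case unfolding qq_final_def by (simp add: ket_def)
next
  case (Suc t)
  have d: "drop t Us = Us ! t # drop (Suc t) Us" using Suc.prems by (simp add: Cons_nth_drop_Suc)
  have "qq_rest B x (drop (Suc t) Us) (qapply B ((U0 # Us) ! Suc t) (padded_state B x (U0 # Us) (Suc t)))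
      = qq_rest B x (drop t Us) (qapply B ((U0 # Us) ! t) (padded_state B x (U0 # Us) t))"
  proof -
    have p: "padded_state B x (U0 # Us) (Suc t) = qoracle x (qapply B ((U0 # Us) ! t) (padded_state B x (U0 # Us) t))"
      using Suc.prems by simp
    have "qq_rest B x (drop t Us) (qapply B ((U0 # Us) ! t) (padded_state B x (U0 # Us) t))
        = qq_rest B x (drop (Suc t) Us) (qapply B (Us ! t) (qoracle x (qapply B ((U0 # Us) ! t) (padded_state B x (U0 # Us) t))))"
      unfolding d by (simp only: qq_rest.simps)
    thus ?thesis unfolding p by simp
  qed
  also have "\<dots> = qq_final B x U0 Us" using Suc.IH Suc.prems by simp
  finally show ?case .
qed

lemma padded_state_stable: "length Ua \<le> t \<Longrightarrow> padded_state B x Ua t = padded_state B x Ua (length Ua)"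
proof (induction t)
  case 0 then show ?case by simp
next
  case (Suc t)
  show ?case
  proof (cases "length Ua = Suc t")
    case True then show ?thesis by simp
  next
    case False
    hence le: "length Ua \<le> t" using Suc.prems by simp
    have "padded_state B x Ua (Suc t) = padded_state B x Ua t" using le by (simp del: padded_state.simps add: padded_state.simps(2))
    thus ?thesis using Suc.IH[OF le] by simp
  qed
qed

lemma Q_CC_le_cost:
  assumes "oq < m" "qcc_valid N1 N2 m own rs"
    and "\<And>a b. (a, b) \<in> pdom N1 N2 f \<Longrightarrow>
      (\<Sum>xs\<in>{xs\<in>qbits m. xs ! oq = the (f a b)}.
         (cmod (qcc_run m rs a b (\<lambda>xs. if xs = replicate m False then 1 else 0) xs))\<^sup>2) \<ge> 2/3"
  shows "Q_CC N1 N2 f \<le> real (qcc_cost rs)"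
  unfolding Q_CC_def using assms by (intro of_nat_mono cInf_lower) blast+

section \<open>The quantum protocol\<close>

text \<open>Alice holds a query algorithm \<open>(W a, U0 a, Us a, out a)\<close> for her marginal and Bob the oracle
  string \<open>\<phi> b\<close>.  In round \<open>t\<close> Alice applies her next unitary, sets the flag if a query is due and
  sends the flag, index and answer qubits to Bob, who flips the answer by the oracle bit and
  sends them back.\<close>

locale query_simulation =
  fixes G lI kW Tm :: nat
    and W :: "bool list \<Rightarrow> nat"
    and U0 :: "bool list \<Rightarrow> (nat \<times> bool \<times> nat \<Rightarrow> nat \<times> bool \<times> nat \<Rightarrow> complex)"
    and Us :: "bool list \<Rightarrow> (nat \<times> bool \<times> nat \<Rightarrow> nat \<times> bool \<times> nat \<Rightarrow> complex) list"
    and out :: "bool list \<Rightarrow> nat \<times> bool \<times> nat \<Rightarrow> bool"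
    and \<phi> :: "bool list \<Rightarrow> bool list"
  assumes index_bits: "G < 2 ^ lI" and W_pos: "\<And>a. 0 < W a" and W_le: "\<And>a. W a \<le> 2 ^ kW"
    and unitary_U0: "\<And>a. unitary_on (qbasis G (W a)) (U0 a)"
    and unitary_Us: "\<And>a U. U \<in> set (Us a) \<Longrightarrow> unitary_on (qbasis G (W a)) U"
    and queries_le: "\<And>a. length (Us a) \<le> Tm"
begin

definition "nqubits = lI + kW + 3"
definition "alg_basis a = qbasis G (W a)"
definition "sent_qubits = {..<Suc (Suc lI)}"
definition alice_op :: "nat \<Rightarrow> bool list \<Rightarrow> bool list \<Rightarrow> bool list \<Rightarrow> complex" where
  "alice_op t a = (if t \<le> length (Us a) then embed_op (alg_basis a) (encode lI kW) ((U0 a # Us a) ! t) else perm_op id)"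
definition flag_op :: "nat \<Rightarrow> bool list \<Rightarrow> bool list \<Rightarrow> bool list \<Rightarrow> complex" where
  "flag_op t a = (if t < length (Us a) then perm_op flip_flag else perm_op id)"
definition bob_op :: "bool list \<Rightarrow> bool list \<Rightarrow> bool list \<Rightarrow> complex" where
  "bob_op b = perm_op (oracle_flip lI G (\<phi> b))"
definition output_op :: "bool list \<Rightarrow> bool list \<Rightarrow> bool list \<Rightarrow> complex" where
  "output_op a = perm_op (copy_output (alg_basis a) (encode lI kW) (out a) (lI + kW + 2))"
definition query_round :: "nat \<Rightarrow> qround list" where
  "query_round t = [(True, alice_op t, {}), (True, flag_op t, sent_qubits), (False, bob_op, sent_qubits), (True, flag_op t, {})]"
definition sim_protocol :: "qround list" where
  "sim_protocol = concat (map query_round [0..<Tm]) @ [(True, alice_op Tm, {}), (True, output_op, {})]"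

lemma inj_on_encode_basis: "inj_on (encode lI kW) (alg_basis a)" unfolding alg_basis_def by (rule inj_on_encode[OF index_bits W_le])
lemma encode_basis_qbits: "encode lI kW ` (alg_basis a) \<subseteq> qbits nqubits" unfolding nqubits_def by (rule encode_image_qbits)
lemma finite_basis: "finite (alg_basis a)" unfolding alg_basis_def by (rule finite_qbasis)

lemma alice_op_unitary: "unitary_on (qbits nqubits) (alice_op t a)"
proof (cases "t \<le> length (Us a)")
  case True
  have "unitary_on (alg_basis a) ((U0 a # Us a) ! t)"
  proof (cases t)
    case 0 then show ?thesis using unitary_U0 unfolding alg_basis_def by simp
  next
    case (Suc t')
    hence "Us a ! t' \<in> set (Us a)" using True by simp
    then show ?thesis using unitary_Us Suc unfolding alg_basis_def by simp
  qed
  then show ?thesis using True unfolding alice_op_def by (simp add: unitary_on_embed_op[OF finite_basis inj_on_encode_basis encode_basis_qbits])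
next
  case False
  then show ?thesis unfolding alice_op_def by (simp add: unitary_on_perm_op_qbits)
qed

lemma flag_op_unitary: "unitary_on (qbits nqubits) (flag_op t a)"
  unfolding flag_op_def using unitary_on_perm_op_qbits[of flip_flag, OF length_flip_flag flip_flag_involution] unitary_on_perm_op_qbits[of id] by simp

lemma bob_op_unitary: "unitary_on (qbits nqubits) (bob_op b)"
  unfolding bob_op_def by (rule unitary_on_perm_op_qbits[OF length_oracle_flip oracle_flip_involution])

lemma output_op_unitary: "unitary_on (qbits nqubits) (output_op a)"
  unfolding output_op_def by (rule unitary_on_perm_op_qbits[OF length_copy_output copy_output_involution])

lemma sent_subset: "sent_qubits \<subseteq> {j. j < nqubits}" unfolding sent_qubits_def nqubits_def by auto

lemma bob_op_local: "local_on nqubits sent_qubits (bob_op b)"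
  unfolding bob_op_def oracle_flip_def
proof (rule local_on_flip_if)
  show "Suc lI \<in> sent_qubits" unfolding sent_qubits_def by simp
  show "Suc lI < nqubits" unfolding nqubits_def by simp
  fix xs ys assume xs: "xs \<in> qbits nqubits" and ys: "ys \<in> qbits nqubits" and H: "\<forall>j<nqubits. j \<in> sent_qubits \<longrightarrow> xs ! j = ys ! j"
  have 0: "xs ! 0 = ys ! 0" using H unfolding sent_qubits_def nqubits_def by auto
  have "take lI (drop 1 xs) = take lI (drop 1 ys)"
  proof (rule nth_equalityI)
    show "length (take lI (drop 1 xs)) = length (take lI (drop 1 ys))" using xs ys by (simp add: qbits_def)
    fix j assume "j < length (take lI (drop 1 xs))"
    hence j: "j < lI" "Suc j < nqubits" using xs unfolding qbits_def nqubits_def by auto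
    have "xs ! Suc j = ys ! Suc j" using H j unfolding sent_qubits_def by auto
    thus "take lI (drop 1 xs) ! j = take lI (drop 1 ys) ! j" using j xs ys by (simp add: qbits_def nqubits_def)
  qed
  thus "(xs ! 0 \<and> (\<exists>i<G. take lI (drop 1 xs) = bin lI i \<and> \<phi> b ! i)) = (ys ! 0 \<and> (\<exists>i<G. take lI (drop 1 ys) = bin lI i \<and> \<phi> b ! i))"
    using 0 by simp
qed

lemma bob_op_local_sent: "local_on nqubits {j. j < nqubits \<and> j \<in> sent_qubits} (bob_op b)"
proof -
  have "{j. j < nqubits \<and> j \<in> sent_qubits} = sent_qubits" using sent_subset by auto
  thus ?thesis using bob_op_local by simp
qed

lemma local_on_all_sent: "local_on nqubits {j. j \<notin> sent_qubits \<longrightarrow> j < nqubits} U"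
proof -
  have "{j. j \<notin> sent_qubits \<longrightarrow> j < nqubits} = {j. j < nqubits}" using sent_subset by auto
  thus ?thesis using local_on_all by simp
qed

lemma qcc_valid_round:
  assumes "qcc_valid N1 N2 nqubits (\<lambda>_. True) rest"
  shows "qcc_valid N1 N2 nqubits (\<lambda>_. True) (query_round t @ rest)"
  using assms sent_subset unfolding query_round_def
  by (simp only: append_Cons append_Nil qcc_valid.simps)
    (simp add: alice_op_unitary flag_op_unitary bob_op_unitary local_on_all bob_op_local_sent bob_op_local
      local_on_all_sent subset_iff)

lemma qcc_valid_protocol: "qcc_valid N1 N2 nqubits (\<lambda>_. True) sim_protocol"
proof -
  have fin: "qcc_valid N1 N2 nqubits (\<lambda>_. True) [(True, alice_op Tm, {}), (True, output_op, {})]"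
    by (simp add: alice_op_unitary output_op_unitary local_on_all)
  have "qcc_valid N1 N2 nqubits (\<lambda>_. True) (concat (map query_round ts) @ [(True, alice_op Tm, {}), (True, output_op, {})])" for ts
  proof (induction ts)
    case Nil then show ?case using fin by simp
  next
    case (Cons t ts)
    then show ?case using qcc_valid_round by simp
  qed
  thus ?thesis unfolding sim_protocol_def .
qed

lemma qcc_cost_protocol: "qcc_cost sim_protocol = Tm * (2 * (lI + 2))"
proof -
  have "qcc_cost (concat (map query_round ts) @ [(True, alice_op Tm, {}), (True, output_op, {})]) = length ts * (2 * (lI + 2))" for ts
    by (induction ts) (auto simp: qcc_cost_def query_round_def sent_qubits_def)
  thus ?thesis unfolding sim_protocol_def by simp
qed

lemma qcc_run_query_round:
  assumes "t < length (Us a)" "length (\<phi> b) = G"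
  shows "qcc_run nqubits (query_round t) a b (embed_state (alg_basis a) (encode lI kW) \<psi>)
    = embed_state (alg_basis a) (encode lI kW) (qoracle (\<phi> b) (qapply (alg_basis a) ((U0 a # Us a) ! t) \<psi>))"
proof -
  have "qcc_run nqubits (query_round t) a b (embed_state (alg_basis a) (encode lI kW) \<psi>)
    = qapply (qbits nqubits) (perm_op flip_flag) (qapply (qbits nqubits) (perm_op (oracle_flip lI G (\<phi> b)))
       (qapply (qbits nqubits) (perm_op flip_flag)
         (embed_state (alg_basis a) (encode lI kW) (qapply (alg_basis a) ((U0 a # Us a) ! t) \<psi>))))"
    using assms(1) by (simp add: query_round_def alice_op_def flag_op_def bob_op_def
        qapply_embed_op[OF finite_basis inj_on_encode_basis encode_basis_qbits])
  also have "\<dots> = embed_state (alg_basis a) (encode lI kW) (qoracle (\<phi> b) (qapply (alg_basis a) ((U0 a # Us a) ! t) \<psi>))"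
    unfolding nqubits_def alg_basis_def by (rule oracle_round_embed[OF index_bits W_le assms(2)])
  finally show ?thesis .
qed

lemma qcc_run_last_round:
  assumes "t = length (Us a)"
  shows "qcc_run nqubits (query_round t) a b (embed_state (alg_basis a) (encode lI kW) \<psi>)
    = embed_state (alg_basis a) (encode lI kW) (qapply (alg_basis a) ((U0 a # Us a) ! t) \<psi>)"
proof -
  have "qcc_run nqubits (query_round t) a b (embed_state (alg_basis a) (encode lI kW) \<psi>)
    = qapply (qbits nqubits) (perm_op id) (qapply (qbits nqubits) (perm_op (oracle_flip lI G (\<phi> b)))
       (qapply (qbits nqubits) (perm_op id)
         (embed_state (alg_basis a) (encode lI kW) (qapply (alg_basis a) ((U0 a # Us a) ! t) \<psi>))))"
    using assms by (simp add: query_round_def alice_op_def flag_op_def bob_op_def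
        qapply_embed_op[OF finite_basis inj_on_encode_basis encode_basis_qbits])
  also have "\<dots> = embed_state (alg_basis a) (encode lI kW) (qapply (alg_basis a) ((U0 a # Us a) ! t) \<psi>)"
    unfolding nqubits_def alg_basis_def by (rule idle_round_embed[OF index_bits W_le])
  finally show ?thesis .
qed

lemma qcc_run_idle_round:
  assumes "length (Us a) < t"
  shows "qcc_run nqubits (query_round t) a b (embed_state (alg_basis a) (encode lI kW) \<psi>)
    = embed_state (alg_basis a) (encode lI kW) \<psi>"
proof -
  have "qcc_run nqubits (query_round t) a b (embed_state (alg_basis a) (encode lI kW) \<psi>)
    = qapply (qbits nqubits) (perm_op id) (qapply (qbits nqubits) (perm_op (oracle_flip lI G (\<phi> b)))
       (qapply (qbits nqubits) (perm_op id) (qapply (qbits nqubits) (perm_op id)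
         (embed_state (alg_basis a) (encode lI kW) \<psi>))))"
    using assms by (simp add: query_round_def alice_op_def flag_op_def bob_op_def)
  also have "qapply (qbits nqubits) (perm_op id) (embed_state (alg_basis a) (encode lI kW) \<psi>)
    = embed_state (alg_basis a) (encode lI kW) \<psi>"
    by (rule qapply_id_embed_state[OF inj_on_encode_basis encode_basis_qbits])
  also have "qapply (qbits nqubits) (perm_op id) (qapply (qbits nqubits) (perm_op (oracle_flip lI G (\<phi> b)))
       (qapply (qbits nqubits) (perm_op id) (embed_state (alg_basis a) (encode lI kW) \<psi>)))
    = embed_state (alg_basis a) (encode lI kW) \<psi>"
    unfolding nqubits_def alg_basis_def by (rule idle_round_embed[OF index_bits W_le])
  finally show ?thesis .
qed

lemma qcc_run_round:
  assumes "length (\<phi> b) = G"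
  shows "qcc_run nqubits (query_round t) a b
      (embed_state (alg_basis a) (encode lI kW) (padded_state (alg_basis a) (\<phi> b) (U0 a # Us a) t))
    = embed_state (alg_basis a) (encode lI kW) (padded_state (alg_basis a) (\<phi> b) (U0 a # Us a) (Suc t))"
  using qcc_run_query_round[OF _ assms] qcc_run_last_round qcc_run_idle_round
  by (cases t "length (Us a)" rule: linorder_cases) simp_all

lemma qcc_run_rounds:
  assumes lx: "length (\<phi> b) = G"
  shows "qcc_run nqubits (concat (map query_round [0..<t])) a b (embed_state (alg_basis a) (encode lI kW) (padded_state (alg_basis a) (\<phi> b) (U0 a # Us a) 0))
       = embed_state (alg_basis a) (encode lI kW) (padded_state (alg_basis a) (\<phi> b) (U0 a # Us a) t)"
proof (induction t)
  case 0 then show ?case by simp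
next
  case (Suc t)
  have "concat (map query_round [0..<Suc t]) = concat (map query_round [0..<t]) @ query_round t" by simp
  then show ?case using Suc qcc_run_round[OF lx] by (simp only: qcc_run_append)
qed

lemma encode_zero: "encode lI kW (0, False, 0) = replicate nqubits False"
  by (rule replicate_eqI) (auto simp: encode_def encode_core_def bin_zero nqubits_def)

lemma initial_state_embed:
  "(\<lambda>xs. if xs = replicate nqubits False then 1 else 0) = embed_state (alg_basis a) (encode lI kW) (padded_state (alg_basis a) x Ua 0)"
proof
  fix xs
  have z: "(0, False, 0) \<in> alg_basis a" unfolding alg_basis_def qbasis_def using W_pos by simp
  show "(if xs = replicate nqubits False then 1 else 0) = embed_state (alg_basis a) (encode lI kW) (padded_state (alg_basis a) x Ua 0) xs"
  proof (cases "xs \<in> encode lI kW ` alg_basis a")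
    case True
    then obtain k where k: "k \<in> alg_basis a" "xs = encode lI kW k" by auto
    have "xs = replicate nqubits False \<longleftrightarrow> k = (0, False, 0)"
      using k z inj_on_encode_basis unfolding encode_zero[symmetric] by (auto dest: inj_onD)
    thus ?thesis using k inj_on_encode_basis by (simp add: embed_state_def ket_def)
  next
    case False
    hence "xs \<noteq> replicate nqubits False" using z encode_zero by force
    thus ?thesis using False by (simp add: embed_state_def)
  qed
qed

lemma final_alice_op:
  "qapply (qbits nqubits) (alice_op Tm a) (embed_state (alg_basis a) (encode lI kW) (padded_state (alg_basis a) x (U0 a # Us a) Tm))
     = embed_state (alg_basis a) (encode lI kW) (qq_final (alg_basis a) x (U0 a) (Us a))"
proof -
  define T where "T = length (Us a)"
  define Ua where "Ua = U0 a # Us a"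
  have TT: "T \<le> Tm" unfolding T_def by (rule queries_le)
  have qqf: "qq_final (alg_basis a) x (U0 a) (Us a) = qapply (alg_basis a) (Ua ! T) (padded_state (alg_basis a) x Ua T)"
    using padded_state_qq_final[of T "U0 a" "Us a" "alg_basis a" x] unfolding T_def Ua_def by simp
  show ?thesis
  proof (cases "T = Tm")
    case True
    then show ?thesis unfolding alice_op_def qqf using qapply_embed_op[OF finite_basis inj_on_encode_basis encode_basis_qbits]
      by (simp add: T_def Ua_def)
  next
    case False
    hence lt: "T < Tm" using TT by simp
    have "padded_state (alg_basis a) x Ua Tm = padded_state (alg_basis a) x Ua (length Ua)"
      by (rule padded_state_stable) (use lt in \<open>simp add: Ua_def T_def\<close>)
    also have "length Ua = Suc T" unfolding Ua_def T_def by simp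
    also have "padded_state (alg_basis a) x Ua (Suc T) = qapply (alg_basis a) (Ua ! T) (padded_state (alg_basis a) x Ua T)"
      using padded_state.simps(2)[of "alg_basis a" x Ua T] unfolding Ua_def T_def by simp
    finally have eq: "padded_state (alg_basis a) x Ua Tm = qq_final (alg_basis a) x (U0 a) (Us a)" using qqf by simp
    have "alice_op Tm a = perm_op id" unfolding alice_op_def using lt T_def by simp
    thus ?thesis using eq qapply_id_embed_state[OF inj_on_encode_basis encode_basis_qbits] unfolding Ua_def by simp
  qed
qed

lemma qcc_run_protocol:
  assumes lx: "length (\<phi> b) = G"
  shows "qcc_run nqubits sim_protocol a b (\<lambda>xs. if xs = replicate nqubits False then 1 else 0)
     = qapply (qbits nqubits) (output_op a) (embed_state (alg_basis a) (encode lI kW) (qq_final (alg_basis a) (\<phi> b) (U0 a) (Us a)))"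
proof -
  have "qcc_run nqubits sim_protocol a b (\<lambda>xs. if xs = replicate nqubits False then 1 else 0)
      = qcc_run nqubits [(True, alice_op Tm, {}), (True, output_op, {})] a b
          (qcc_run nqubits (concat (map query_round [0..<Tm])) a b (embed_state (alg_basis a) (encode lI kW) (padded_state (alg_basis a) (\<phi> b) (U0 a # Us a) 0)))"
    unfolding sim_protocol_def qcc_run_append initial_state_embed[of a "\<phi> b" "U0 a # Us a"] ..
  also have "\<dots> = qcc_run nqubits [(True, alice_op Tm, {}), (True, output_op, {})] a b
          (embed_state (alg_basis a) (encode lI kW) (padded_state (alg_basis a) (\<phi> b) (U0 a # Us a) Tm))"
    unfolding qcc_run_rounds[OF lx] ..
  also have "\<dots> = qapply (qbits nqubits) (output_op a) (embed_state (alg_basis a) (encode lI kW) (qq_final (alg_basis a) (\<phi> b) (U0 a) (Us a)))"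
    using final_alice_op[of a "\<phi> b"] by simp
  finally show ?thesis .
qed

lemma output_probability:
  "(\<Sum>xs\<in>{xs\<in>qbits nqubits. xs ! (lI + kW + 2) = v}.
      (cmod (qapply (qbits nqubits) (output_op a) (embed_state (alg_basis a) (encode lI kW) s) xs))\<^sup>2)
   = (\<Sum>k\<in>{k\<in>alg_basis a. out a k = v}. (cmod (s k))\<^sup>2)"
proof -
  define \<sigma> where "\<sigma> = copy_output (alg_basis a) (encode lI kW) (out a) (lI + kW + 2)"
  define h where "h k = encode_core lI kW k @ [out a k]" for k
  let ?X = "{xs\<in>qbits nqubits. xs ! (lI + kW + 2) = v}"
  have inj_core: "inj_on (encode_core lI kW) (alg_basis a)"
    unfolding alg_basis_def by (rule inj_on_encode_core[OF index_bits W_le])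
  then have "inj_on h (alg_basis a)"
    unfolding h_def inj_on_def by simp
  moreover have "\<sigma> (encode lI kW k) = h k" if "k \<in> alg_basis a" for k
    unfolding \<sigma>_def h_def by (rule copy_output_encode[OF inj_core that])
  moreover have "h k \<in> ?X \<longleftrightarrow> out a k = v" for k
    unfolding h_def qbits_def nqubits_def by (simp add: nth_append)
  moreover have "qapply (qbits nqubits) (output_op a) (embed_state (alg_basis a) (encode lI kW) s) xs
      = embed_state (alg_basis a) (encode lI kW) s (\<sigma> xs)" if "xs \<in> ?X" for xs
  proof -
    have "length xs = nqubits"
      using that by (simp add: qbits_def)
    then show ?thesis
      unfolding output_op_def \<sigma>_def qapply_perm_op_qbits[OF length_copy_output copy_output_involution] by simp
  qed
  ultimately show ?thesis
    using sum_norm_embed_state_perm[where X="?X" and h=h and \<sigma>=\<sigma> and s=s, OF _ inj_on_encode_basis] finite_qbits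
      copy_output_involution[of "alg_basis a" "encode lI kW" "out a" "lI + kW + 2"]
    unfolding \<sigma>_def by simp
qed

lemma protocol_success:
  assumes "length (\<phi> b) = G"
  shows "(\<Sum>xs\<in>{xs\<in>qbits nqubits. xs ! (lI + kW + 2) = v}.
      (cmod (qcc_run nqubits sim_protocol a b (\<lambda>xs. if xs = replicate nqubits False then 1 else 0) xs))\<^sup>2)
    = (\<Sum>k\<in>{k\<in>alg_basis a. out a k = v}. (cmod (qq_final (alg_basis a) (\<phi> b) (U0 a) (Us a) k))\<^sup>2)"
  unfolding qcc_run_protocol[OF assms] by (rule output_probability)

lemma Q_CC_le_simulation:
  assumes "\<And>a b. (a, b) \<in> pdom N1 N2 f \<Longrightarrow> length (\<phi> b) = G \<and>
    (\<Sum>k\<in>{k\<in>alg_basis a. out a k = the (f a b)}. (cmod (qq_final (alg_basis a) (\<phi> b) (U0 a) (Us a) k))\<^sup>2) \<ge> 2/3"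
  shows "Q_CC N1 N2 f \<le> real (Tm * (2 * (lI + 2)))"
  unfolding qcc_cost_protocol[symmetric]
  by (rule Q_CC_le_cost[OF _ qcc_valid_protocol, where oq="lI + kW + 2"])
    (use assms protocol_success in \<open>simp_all add: nqubits_def\<close>)

end

lemma Q_query_attained: "\<exists>W U0 Us out. q_algorithm n g W U0 Us out \<and> real (length Us) = Q_query n g"
proof -
  let ?S = "{T. \<exists>W U0 Us out. length Us = T \<and> q_algorithm n g W U0 Us out}"
  have "Q_query n g = real (Inf ?S)"
    unfolding Q_query_def q_algorithm_def by (simp add: conj_commute conj_left_commute)
  moreover have "?S \<noteq> {}"
    using ex_q_algorithm[of n g] by blast
  then have "Inf ?S \<in> ?S"
    by (rule Inf_nat_def1)
  ultimately show ?thesis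
    by auto
qed

lemma q_algorithm_family:
  "\<exists>W U0 Us out. \<forall>a.
    (a \<in> A \<longrightarrow> q_algorithm n (g a) (W a) (U0 a) (Us a) (out a) \<and> real (length (Us a)) = Q_query n (g a)) \<and>
    (a \<notin> A \<longrightarrow> W a = 1 \<and> U0 a = perm_op id \<and> Us a = [])"
proof -
  have "\<exists>W U0 Us out. (a \<in> A \<longrightarrow> q_algorithm n (g a) W U0 Us out \<and> real (length Us) = Q_query n (g a)) \<and>
      (a \<notin> A \<longrightarrow> W = 1 \<and> U0 = perm_op id \<and> Us = [])" for a
    using Q_query_attained[of n "g a"] by (cases "a \<in> A") auto
  then show ?thesis
    by metis
qed

lemma Q_CC_le_ext_cost:
  assumes ext: "is_extension N2 G \<phi>"
  shows "Q_CC N1 N2 f \<le> real (2 * (ceil_log2 (Suc G) + 2)) * ext_cost Q_query N2 G (Mar N1 N2 f) \<phi>"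
proof -
  define r where "r = ext_cost Q_query N2 G (Mar N1 N2 f) \<phi>"
  define g where "g a = ext_fun N2 \<phi> (marg N1 N2 f a)" for a
  define A where "A = {a. \<exists>b. (a, b) \<in> pdom N1 N2 f}"
  obtain W U0 Us out where alg: "\<forall>a.
      (a \<in> A \<longrightarrow> q_algorithm G (g a) (W a) (U0 a) (Us a) (out a) \<and> real (length (Us a)) = Q_query G (g a)) \<and>
      (a \<notin> A \<longrightarrow> W a = 1 \<and> U0 a = perm_op id \<and> Us a = [])"
    using q_algorithm_family[of A G g] by blast
  define lI where "lI = ceil_log2 (Suc G)"
  define kW where "kW = ceil_log2 (Max (insert 1 (W ` A)))"
  define Tm where "Tm = nat \<lfloor>r\<rfloor>"
  have r: "0 \<le> r"
    unfolding r_def by (simp add: ext_cost_nonneg finite_Mar)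
  have finA: "finite A"
    unfolding A_def by (rule finite_pdom_inputs)
  have Tm: "length (Us a) \<le> Tm" for a
  proof (cases "a \<in> A")
    case True
    then obtain b where "(a, b) \<in> pdom N1 N2 f"
      unfolding A_def by blast
    then have "Q_query G (g a) \<le> r"
      unfolding r_def g_def by (rule marg_cost_le_ext_cost)
    then show ?thesis
      using alg True unfolding Tm_def by (intro le_nat_floor) simp
  qed (use alg in simp)
  have kW: "W a \<le> 2 ^ kW" for a
  proof -
    have "W a \<le> Max (insert 1 (W ` A))"
      using finA alg by (cases "a \<in> A") auto
    also have "\<dots> \<le> 2 ^ kW"
      unfolding kW_def by (rule le_two_power_ceil_log2)
    finally show ?thesis .
  qed
  have id_unitary: "unitary_on (qbasis G 1) (perm_op id)"
    by (rule unitary_on_perm_op) (auto simp: finite_qbasis)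
  interpret q: query_simulation G lI kW Tm W U0 Us out \<phi>
  proof
    show "G < 2 ^ lI"
      using le_two_power_ceil_log2[of "Suc G"] unfolding lI_def by simp
    fix a
    show "0 < W a" "unitary_on (qbasis G (W a)) (U0 a)"
      using alg id_unitary unfolding q_algorithm_def by (cases "a \<in> A"; simp)+
    show "W a \<le> 2 ^ kW" "length (Us a) \<le> Tm"
      by (rule kW, rule Tm)
    fix U assume "U \<in> set (Us a)"
    then show "unitary_on (qbasis G (W a)) U"
      using alg unfolding q_algorithm_def by (cases "a \<in> A") auto
  qed
  have "length (\<phi> b) = G \<and> (\<Sum>k\<in>{k\<in>q.alg_basis a. out a k = the (f a b)}.
      (cmod (qq_final (q.alg_basis a) (\<phi> b) (U0 a) (Us a) k))\<^sup>2) \<ge> 2/3" if ab: "(a, b) \<in> pdom N1 N2 f" for a b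
  proof -
    have "a \<in> A"
      using ab unfolding A_def by auto
    then have "q_algorithm G (g a) (W a) (U0 a) (Us a) (out a)"
      using alg by blast
    then show ?thesis
      using ext ab ext_marg_qdom[OF ext ab] ext_marg_value[OF ext ab]
      unfolding q_algorithm_def q.alg_basis_def g_def is_extension_def pdom_def by auto
  qed
  then have "Q_CC N1 N2 f \<le> real (Tm * (2 * (lI + 2)))"
    by (rule q.Q_CC_le_simulation)
  also have "\<dots> = real (2 * (lI + 2)) * real Tm"
    by (simp only: of_nat_mult mult.commute)
  also have "\<dots> \<le> real (2 * (lI + 2)) * r"
    unfolding Tm_def using of_nat_floor[OF r] by (intro mult_left_mono) auto
  finally show ?thesis
    unfolding lI_def r_def .
qed

lemma scaled_le_log_ext_cplx:
  assumes "2 \<le> G" "N2 \<le> G" "finite S" "K \<le> 12 * log 2 (real G)"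
    and bound: "\<And>\<phi>. is_extension N2 G \<phi> \<Longrightarrow> X \<le> K * (ext_cost C N2 G S \<phi> + 1)"
  shows "1 / 12 * X \<le> log 2 (real G) * (ext_cplx C N2 G S + 1)"
proof -
  have lg: "1 \<le> log 2 (real G)"
    using assms(1) by (simp add: le_log_iff)
  have "X \<le> 12 * log 2 (real G) * (ext_cplx C N2 G S + 1)"
  proof (rule le_ext_cplx[OF assms(2)])
    show "0 < 12 * log 2 (real G)"
      using lg by simp
    fix \<phi> assume "is_extension N2 G \<phi>"
    then have "X \<le> K * (ext_cost C N2 G S \<phi> + 1)"
      by (rule bound)
    also have "\<dots> \<le> 12 * log 2 (real G) * (ext_cost C N2 G S \<phi> + 1)"
      using assms(3,4) ext_cost_nonneg by (intro mult_right_mono) auto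
    finally show "X \<le> 12 * log 2 (real G) * (ext_cost C N2 G S \<phi> + 1)" .
  qed
  then show ?thesis
    by simp
qed

theorem theorem18:
  shows "\<exists>c>0. \<forall>N1 N2 G f. 2 \<le> G \<and> N2 \<le> G \<longrightarrow>
      c * R_CC N1 N2 f \<le> log 2 (real G) * (ext_cplx R_query N2 G (Mar N1 N2 f) + 1) \<and>
      c * D_CC N1 N2 f \<le> log 2 (real G) * (ext_cplx D_query N2 G (Mar N1 N2 f) + 1) \<and>
      c * R0_CC N1 N2 f \<le> log 2 (real G) * (ext_cplx R0_query N2 G (Mar N1 N2 f) + 1) \<and>
      c * Q_CC N1 N2 f \<le> log 2 (real G) * (ext_cplx Q_query N2 G (Mar N1 N2 f) + 1)"
proof (intro exI[of _ "1/12"] conjI allI impI)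
  fix N1 N2 G :: nat and f :: "bool list \<Rightarrow> bool list \<Rightarrow> bool option"
  assume "2 \<le> G \<and> N2 \<le> G"
  then have G: "2 \<le> G" "N2 \<le> G"
    by auto
  have "1 \<le> log 2 (real G)" "real (ceil_log2 G) \<le> log 2 (real G) + 1"
    "real (ceil_log2 (Suc G)) \<le> log 2 (real G) + 2"
    using G(1) by (simp_all add: le_log_iff ceil_log2_le_log ceil_log2_Suc_le_log)
  then have K: "real (ceil_log2 G + 4) \<le> 12 * log 2 (real G)"
    "real (2 * (ceil_log2 (Suc G) + 2)) \<le> 12 * log 2 (real G)"
    by simp_all
  note scaled = scaled_le_log_ext_cplx[OF G finite_Mar]
  show "1/12 * R_CC N1 N2 f \<le> log 2 (real G) * (ext_cplx R_query N2 G (Mar N1 N2 f) + 1)"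
    by (rule scaled[OF _ R_CC_le_ext_cost]) (use K(1) in simp_all)
  show "1/12 * D_CC N1 N2 f \<le> log 2 (real G) * (ext_cplx D_query N2 G (Mar N1 N2 f) + 1)"
    by (rule scaled[OF _ D_CC_le_ext_cost]) (use K(1) in simp_all)
  show "1/12 * R0_CC N1 N2 f \<le> log 2 (real G) * (ext_cplx R0_query N2 G (Mar N1 N2 f) + 1)"
    by (rule scaled[OF K(1) R0_CC_le_ext_cost])
  show "1/12 * Q_CC N1 N2 f \<le> log 2 (real G) * (ext_cplx Q_query N2 G (Mar N1 N2 f) + 1)"
  proof (rule scaled[OF K(2)])
    fix \<phi> assume "is_extension N2 G \<phi>"
    moreover have "0 \<le> ext_cost Q_query N2 G (Mar N1 N2 f) \<phi>"
      by (simp add: ext_cost_nonneg finite_Mar)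
    ultimately show "Q_CC N1 N2 f \<le> real (2 * (ceil_log2 (Suc G) + 2)) * (ext_cost Q_query N2 G (Mar N1 N2 f) \<phi> + 1)"
      using Q_CC_le_ext_cost[of N2 G \<phi> N1 f]
      by (simp add: distrib_left)
  qed
qed simp

end
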